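(* Let $V$ be a $p$-dimensional real vector space, $\Lambda\subset V$ a full lattice, and $X=\bigcup_{\alpha\in\mathfrak I}X_\alpha\subset V$ an ordered $p$-complex which is a $\Lambda$-complex. Let $M_1<M_2$ be integers, $\widehat\Lambda:=\Lambda\times(M_2-M_1)\mathbb Z\subset V\times\mathbb R$, and $\omega:V\to\mathbb R$ linear. Then the ordered $(p+1)$-complex $Y=Y(X,\omega,[M_1,M_2])=\bigcup_{\gamma\in J}Y_\gamma\subset V\times\mathbb R$ is a $\widehat\Lambda$-complex. Moreover, defining $\Omega:V\times\mathbb R\to\mathbb R$ by $\Omega(s\times t)=\omega(s)+t$, for every $\gamma=(\alpha,v,\ell)\in J$ and every $\kappa\in Y_\gamma$, $$A(v)+\ell-1\le\Omega(\kappa)\le A(v)+\ell.$$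
   Context: Ordered complexes: an ordered $p$-complex in a $p$-dimensional real vector space $V$ is a family $X=\bigcup_{\alpha\in\mathfrak I}X_\alpha$ of $p$-simplices $X_\alpha\subset V$ (convex hulls of $p+1$ affinely independent points, vertex set $\mathrm{Vt}(X_\alpha)$), each with a total order $\prec_\alpha$ on $\mathrm{Vt}(X_\alpha)$; $[s_1,\dots,s_t]$ denotes a convex hull. For $x$ in a simplex $S$, $\mathrm{SpVt}(x)$ (spanning vertices) is the set of vertices of $S$ whose barycentric coordinate in $x$ is positive. $\Lambda$-complex: $X$ is a $\Lambda$-complex if (i) for all $\alpha,\beta$, $X_\alpha\cap X_\beta$ is empty or equals the convex hull of $\mathrm{Vt}(X_\alpha)\cap\mathrm{Vt}(X_\beta)$; (ii) for $v,w\in\mathrm{Vt}(X_\alpha)\cap\mathrm{Vt}(X_\beta)$, $v\prec_\alpha w\iff v\prec_\beta w$; (iii) if $v,w\in\mathrm{Vt}(X_\alpha)$, $\lambda\in\Lambda$ and $v+\lambda,w+\lambda\in\mathrm{Vt}(X_{\alpha'})$, then $v\prec_\alpha w\iff v+\lambda\prec_{\alpha'}w+\lambda$; (iv) the quotient map $V\to V/\Lambda$ restricted to $X$ is surjective and is injective on the union of the interiors of the $X_\alpha$; (v) if $x,x'\in X$, $\lambda\in\Lambda$, $x'=x+\lambda$, then $\mathrm{SpVt}(x')=\mathrm{SpVt}(x)+\lambda$ (by (i), $\mathrm{SpVt}(x)$ does not depend on the simplex containing $x$). Construction $Y(X,\omega,[M_1,M_2])$: let $A:V\to(0,1]$ be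 defined by $A(u)-\omega(u)\in\mathbb Z$, $0<A(u)\le1$, and put $a(u):=A(u)-\omega(u)\in\mathbb Z$. Define the order $\prec_\alpha^A$ on $\mathrm{Vt}(X_\alpha)$: $u\prec_\alpha^A u'$ iff $A(u)<A(u')$, or $A(u)=A(u')$ and $u\prec_\alpha u'$. Let $J=\{(\alpha,v,\ell):\alpha\in\mathfrak I,\ v\in\mathrm{Vt}(X_\alpha),\ \ell\in\mathbb Z,\ M_1\le\ell<M_2\}$. For $\gamma=(\alpha,v,\ell)\in J$, list $\mathrm{Vt}(X_\alpha)$ as $v_0\prec_\alpha^A\cdots\prec_\alpha^A v_p$ with $v=v_j$, and set $$Y_\gamma=[v_0\times(a(v_0)+\ell),\dots,v_j\times(a(v_j)+\ell),\ v_j\times(a(v_j)+\ell-1),\ v_{j+1}\times(a(v_{j+1})+\ell-1),\dots,v_p\times(a(v_p)+\ell-1)]\subset V\times\mathbb R,$$ ordered by: $\rho\prec_\gamma\rho'$ iff $\pi_V(\rho)\prec_\alpha\pi_V(\rho')$, or $\pi_V(\rho)=\pi_V(\rho')$ and $\pi_{\mathbb R}(\rho')<\pi_{\mathbb R}(\rho)$ ($\pi_V,\pi_{\mathbb R}$ the projections). Then $Y(X,\omega,[M_1,M_2]):=\bigcup_{\gamma\in J}Y_\gamma$. *)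

theory Defs
  imports "HOL-Analysis.Analysis"
begin

definition full_lattice :: "'a::euclidean_space set \<Rightarrow> bool" where
  "full_lattice L \<longleftrightarrow> (\<exists>B. independent B \<and> span B = UNIV \<and>
      L = {(\<Sum>b\<in>B. of_int (n b) *\<^sub>R b) | n. True})"

definition bary :: "'a::euclidean_space set \<Rightarrow> 'a \<Rightarrow> 'a \<Rightarrow> real" where
  "bary C x = (THE u. (\<forall>c. c \<notin> C \<longrightarrow> u c = 0) \<and> sum u C = 1 \<and> (\<Sum>c\<in>C. u c *\<^sub>R c) = x)"

definition SpVt :: "'a::euclidean_space set \<Rightarrow> 'a \<Rightarrow> 'a set" where
  "SpVt C x = {c \<in> C. bary C x c > 0}"

definition strict_total_on :: "'a set \<Rightarrow> ('a \<Rightarrow> 'a \<Rightarrow> bool) \<Rightarrow> bool" where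
  "strict_total_on S r \<longleftrightarrow>
     (\<forall>x\<in>S. \<not> r x x) \<and>
     (\<forall>x\<in>S. \<forall>y\<in>S. \<forall>z\<in>S. r x y \<longrightarrow> r y z \<longrightarrow> r x z) \<and>
     (\<forall>x\<in>S. \<forall>y\<in>S. x \<noteq> y \<longrightarrow> r x y \<or> r y x)"

text \<open>Ordered p-complex in the p-dimensional space 'a (p = DIM('a)):
  index set I, vertex sets Vt \<alpha> (simplex X_\<alpha> = convex hull (Vt \<alpha>)), orders ord \<alpha>.\<close>
definition ordered_complex :: "'i set \<Rightarrow> ('i \<Rightarrow> 'a::euclidean_space set) \<Rightarrow> ('i \<Rightarrow> 'a \<Rightarrow> 'a \<Rightarrow> bool) \<Rightarrow> bool" where
  "ordered_complex I Vt ord \<longleftrightarrow>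
     (\<forall>\<alpha>\<in>I. finite (Vt \<alpha>) \<and> card (Vt \<alpha>) = DIM('a) + 1 \<and> \<not> affine_dependent (Vt \<alpha>)
            \<and> strict_total_on (Vt \<alpha>) (ord \<alpha>))"

definition Lambda_complex :: "'a::euclidean_space set \<Rightarrow> 'i set \<Rightarrow> ('i \<Rightarrow> 'a set) \<Rightarrow> ('i \<Rightarrow> 'a \<Rightarrow> 'a \<Rightarrow> bool) \<Rightarrow> bool" where
  "Lambda_complex L I Vt ord \<longleftrightarrow>
     ordered_complex I Vt ord \<and>
     \<comment> \<open>(i)\<close>
     (\<forall>\<alpha>\<in>I. \<forall>\<beta>\<in>I. convex hull (Vt \<alpha>) \<inter> convex hull (Vt \<beta>) = {} \<or>
         convex hull (Vt \<alpha>) \<inter> convex hull (Vt \<beta>) = convex hull (Vt \<alpha> \<inter> Vt \<beta>)) \<and>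
     \<comment> \<open>(ii)\<close>
     (\<forall>\<alpha>\<in>I. \<forall>\<beta>\<in>I. \<forall>v\<in>Vt \<alpha> \<inter> Vt \<beta>. \<forall>w\<in>Vt \<alpha> \<inter> Vt \<beta>. ord \<alpha> v w \<longleftrightarrow> ord \<beta> v w) \<and>
     \<comment> \<open>(iii)\<close>
     (\<forall>\<alpha>\<in>I. \<forall>\<alpha>'\<in>I. \<forall>v\<in>Vt \<alpha>. \<forall>w\<in>Vt \<alpha>. \<forall>t\<in>L.
         v + t \<in> Vt \<alpha>' \<longrightarrow> w + t \<in> Vt \<alpha>' \<longrightarrow> (ord \<alpha> v w \<longleftrightarrow> ord \<alpha>' (v + t) (w + t))) \<and>
     \<comment> \<open>(iv) surjectivity of V \<rightarrow> V/L on X, injectivity on the union of interiors\<close>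
     (\<forall>y. \<exists>x\<in>(\<Union>\<alpha>\<in>I. convex hull (Vt \<alpha>)). y - x \<in> L) \<and>
     (\<forall>x\<in>(\<Union>\<alpha>\<in>I. interior (convex hull (Vt \<alpha>))). \<forall>x'\<in>(\<Union>\<alpha>\<in>I. interior (convex hull (Vt \<alpha>))).
         x - x' \<in> L \<longrightarrow> x = x') \<and>
     \<comment> \<open>(v)\<close>
     (\<forall>\<alpha>\<in>I. \<forall>\<alpha>'\<in>I. \<forall>x\<in>convex hull (Vt \<alpha>). \<forall>t\<in>L. x + t \<in> convex hull (Vt \<alpha>') \<longrightarrow>
         SpVt (Vt \<alpha>') (x + t) = (\<lambda>v. v + t) ` SpVt (Vt \<alpha>) x)"

text \<open>A(u) \<in> (0,1] with A(u) - \<omega>(u) \<in> \<int>; a(u) = A(u) - \<omega>(u).\<close>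
definition a_int :: "('a \<Rightarrow> real) \<Rightarrow> 'a \<Rightarrow> int" where
  "a_int \<omega> u = 1 - \<lceil>\<omega> u\<rceil>"

definition A_fun :: "('a \<Rightarrow> real) \<Rightarrow> 'a \<Rightarrow> real" where
  "A_fun \<omega> u = \<omega> u + of_int (a_int \<omega> u)"

definition ordA :: "('a \<Rightarrow> real) \<Rightarrow> ('i \<Rightarrow> 'a \<Rightarrow> 'a \<Rightarrow> bool) \<Rightarrow> 'i \<Rightarrow> 'a \<Rightarrow> 'a \<Rightarrow> bool" where
  "ordA \<omega> ord \<alpha> u u' \<longleftrightarrow> A_fun \<omega> u < A_fun \<omega> u' \<or> (A_fun \<omega> u = A_fun \<omega> u' \<and> ord \<alpha> u u')"

definition J_idx :: "'i set \<Rightarrow> ('i \<Rightarrow> 'a set) \<Rightarrow> int \<Rightarrow> int \<Rightarrow> ('i \<times> 'a \<times> int) set" where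
  "J_idx I Vt M1 M2 = {(\<alpha>, v, l). \<alpha> \<in> I \<and> v \<in> Vt \<alpha> \<and> M1 \<le> l \<and> l < M2}"

text \<open>Vertex set of Y_\<gamma>: v_0..v_j at height a+l, v_j..v_p at height a+l-1.\<close>
definition VtY :: "('a \<Rightarrow> real) \<Rightarrow> ('i \<Rightarrow> 'a set) \<Rightarrow> ('i \<Rightarrow> 'a \<Rightarrow> 'a \<Rightarrow> bool) \<Rightarrow> 'i \<times> 'a \<times> int \<Rightarrow> ('a \<times> real) set" where
  "VtY \<omega> Vt ord \<gamma> = (case \<gamma> of (\<alpha>, v, l) \<Rightarrow>
     {(u, of_int (a_int \<omega> u + l)) | u. u \<in> Vt \<alpha> \<and> (ordA \<omega> ord \<alpha> u v \<or> u = v)} \<union>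
     {(u, of_int (a_int \<omega> u + l - 1)) | u. u \<in> Vt \<alpha> \<and> (ordA \<omega> ord \<alpha> v u \<or> u = v)})"

definition ordY :: "('i \<Rightarrow> 'a \<Rightarrow> 'a \<Rightarrow> bool) \<Rightarrow> 'i \<times> 'a \<times> int \<Rightarrow> 'a \<times> real \<Rightarrow> 'a \<times> real \<Rightarrow> bool" where
  "ordY ord \<gamma> \<rho> \<rho>' = (case \<gamma> of (\<alpha>, v, l) \<Rightarrow>
     ord \<alpha> (fst \<rho>) (fst \<rho>') \<or> (fst \<rho> = fst \<rho>' \<and> snd \<rho>' < snd \<rho>))"

end

theory Submission
  imports Defs
begin

text \<open>
  Let \<open>lam\<close> be the barycentric coordinates of \<open>x = fst z\<close> in a simplex \<open>X\<^sub>\<alpha>\<close> and call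
  \<open>snd z - (\<Sum>u. lam u * a u)\<close> the height of \<open>z\<close>. Lay the intervals of length \<open>lam u\<close> end to end
  in \<open>[0, 1]\<close>, in the order \<open>\<prec>\<^sup>A\<close>, and extend this tiling periodically to the real line. A point
  of \<open>Y (\<alpha>, v, l)\<close> has height in \<open>[l - 1, l]\<close>, and its barycentric coordinate at
  \<open>(u, a u + m)\<close> is the length of the part of the \<open>m\<close>-th translate of the interval of \<open>u\<close> that
  lies in the window \<open>[height, height + 1]\<close>. This formula only involves \<open>z\<close> and \<open>lam\<close>, which
  agree on common faces of \<open>X\<close>, so the simplices \<open>Y\<^sub>\<gamma>\<close> meet in common faces; and it is
  equivariant under \<open>\<Lambda>\<close>, because translation by \<open>t \<in> \<Lambda>\<close> shifts \<open>A\<close> by \<open>\<omega> t\<close> modulo 1 and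
  hence rotates the order \<open>\<prec>\<^sup>A\<close> cyclically, so spanning vertices are preserved. Interior points
  of the levels \<open>M\<^sub>1 \<le> l < M\<^sub>2\<close> have heights filling exactly one vertical period
  \<open>M\<^sub>2 - M\<^sub>1\<close>, which gives surjectivity and injectivity modulo \<open>\<Lambda> \<times> (M\<^sub>2 - M\<^sub>1)\<int>\<close>.
  Finally \<open>\<omega> (fst \<kappa>) + snd \<kappa>\<close> lies in \<open>[A v + l - 1, A v + l]\<close> at every vertex because
  \<open>0 < A \<le> 1\<close>, and the bound passes to the convex hull.
\<close>

lemma bary_eqI:
  fixes C :: "'a::euclidean_space set"
  assumes fin: "finite C" and ind: "\<not> affine_dependent C"
    and zero: "\<And>c. c \<notin> C \<Longrightarrow> u c = 0" and sum1: "sum u C = 1"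
    and comb: "(\<Sum>c\<in>C. u c *\<^sub>R c) = x"
  shows "bary C x = u"
  unfolding bary_def
proof (rule the_equality)
  show "(\<forall>c. c \<notin> C \<longrightarrow> u c = 0) \<and> sum u C = 1 \<and> (\<Sum>c\<in>C. u c *\<^sub>R c) = x"
    using zero sum1 comb by blast
next
  fix u' assume u': "(\<forall>c. c \<notin> C \<longrightarrow> u' c = 0) \<and> sum u' C = 1 \<and> (\<Sum>c\<in>C. u' c *\<^sub>R c) = x"
  have "sum (\<lambda>c. u' c - u c) C = 0" "(\<Sum>c\<in>C. (u' c - u c) *\<^sub>R c) = 0"
    using u' sum1 comb by (simp_all add: sum_subtractf scaleR_diff_left)
  then have "\<forall>c\<in>C. u' c - u c = 0"
    using ind affine_dependent_explicit_finite[OF fin] by blast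
  then show "u' = u" using u' zero by (metis eq_iff_diff_eq_0 ext)
qed

lemma bary_convex_hull:
  fixes C :: "'a::euclidean_space set"
  assumes fin: "finite C" and ind: "\<not> affine_dependent C" and x: "x \<in> convex hull C"
  shows "(\<forall>c. c \<notin> C \<longrightarrow> bary C x c = 0) \<and> sum (bary C x) C = 1
     \<and> (\<Sum>c\<in>C. bary C x c *\<^sub>R c) = x \<and> (\<forall>c. 0 \<le> bary C x c)"
proof -
  obtain u where u: "\<forall>c\<in>C. 0 \<le> u c" "sum u C = 1" "(\<Sum>c\<in>C. u c *\<^sub>R c) = x"
    using x convex_hull_finite[OF fin] by auto
  define u' where "u' = (\<lambda>c. if c \<in> C then u c else 0)"
  have sum1: "sum u' C = 1" and comb: "(\<Sum>c\<in>C. u' c *\<^sub>R c) = x"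
    using u(2,3) unfolding u'_def by simp_all
  have "bary C x = u'" by (rule bary_eqI[OF fin ind _ sum1 comb]) (simp add: u'_def)
  then show ?thesis using u(1) sum1 comb by (simp add: u'_def)
qed

lemma bary_subset:
  fixes C :: "'a::euclidean_space set"
  assumes fin: "finite C" and ind: "\<not> affine_dependent C"
    and K: "K \<subseteq> C" and x: "x \<in> convex hull K"
  shows "bary C x = bary K x"
proof -
  note h = bary_convex_hull[OF finite_subset[OF K fin] affine_independent_subset[OF ind K] x]
  show ?thesis
  proof (rule bary_eqI[OF fin ind])
    show "c \<notin> C \<Longrightarrow> bary K x c = 0" for c using h K by blast
    have "sum (bary K x) C = sum (bary K x) K"
      by (rule sum.mono_neutral_right[OF fin K]) (use h in blast)
    then show "sum (bary K x) C = 1" using h by simp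
    have "(\<Sum>c\<in>C. bary K x c *\<^sub>R c) = (\<Sum>c\<in>K. bary K x c *\<^sub>R c)"
      by (rule sum.mono_neutral_right[OF fin K]) (use h in auto)
    then show "(\<Sum>c\<in>C. bary K x c *\<^sub>R c) = x" using h by simp
  qed
qed

lemma bary_pos_interior:
  fixes C :: "'a::euclidean_space set"
  assumes fin: "finite C" and ind: "\<not> affine_dependent C" and card: "card C = DIM('a) + 1"
    and z: "z \<in> interior (convex hull C)" and c: "c \<in> C"
  shows "0 < bary C z c"
proof -
  obtain u where u: "\<forall>x\<in>C. 0 < u x" "sum u C = 1" "(\<Sum>x\<in>C. u x *\<^sub>R x) = z"
    using z interior_convex_hull_explicit_minimal[OF ind] card by auto
  define u' where "u' = (\<lambda>c. if c \<in> C then u c else 0)"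
  have "bary C z = u'"
    by (rule bary_eqI[OF fin ind]) (use u in \<open>simp_all add: u'_def\<close>)
  then show ?thesis using u(1) c unfolding u'_def by simp
qed

lemma SpVt_convex_hull:
  fixes C :: "'a::euclidean_space set"
  assumes "finite C" and "\<not> affine_dependent C" and "x \<in> convex hull C"
  shows "SpVt C x = {c. 0 < bary C x c}"
proof -
  have "c \<in> C" if "0 < bary C x c" for c
    using that bary_convex_hull[OF assms] by (metis less_irrefl)
  then show ?thesis unfolding SpVt_def by blast
qed

lemma sum_translate:
  fixes t :: "'a::ab_group_add"
  assumes S: "finite S" and T: "finite T" and zero: "\<And>w. w \<notin> T \<Longrightarrow> f w = 0"
    and supp: "\<And>w. f w \<noteq> 0 \<Longrightarrow> w - t \<in> S"
  shows "sum f T = (\<Sum>u\<in>S. f (u + t))"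
proof -
  have "sum f T = sum f ((\<lambda>u. u + t) ` S)"
  proof (rule sum.mono_neutral_cong[OF finite_imageI[OF S] T])
    show "f w = 0" if "w \<in> T - (\<lambda>u. u + t) ` S" for w
      using that supp by (metis DiffD2 diff_add_cancel image_eqI)
  qed (use zero in auto)
  also have "\<dots> = (\<Sum>u\<in>S. f (u + t))" by (simp add: sum.reindex inj_on_def)
  finally show ?thesis .
qed

lemma strict_total_onD:
  assumes "strict_total_on S r"
  shows strict_total_on_irrefl: "x \<in> S \<Longrightarrow> \<not> r x x"
    and strict_total_on_trans: "x \<in> S \<Longrightarrow> y \<in> S \<Longrightarrow> z \<in> S \<Longrightarrow> r x y \<Longrightarrow> r y z \<Longrightarrow> r x z"
    and strict_total_on_total: "x \<in> S \<Longrightarrow> y \<in> S \<Longrightarrow> x \<noteq> y \<Longrightarrow> r x y \<or> r y x"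
    and strict_total_on_asym: "x \<in> S \<Longrightarrow> y \<in> S \<Longrightarrow> r x y \<Longrightarrow> \<not> r y x"
  using assms unfolding strict_total_on_def by meson+

lemma strict_total_on_converse:
  "strict_total_on S r \<Longrightarrow> strict_total_on S (\<lambda>x y. r y x)"
  unfolding strict_total_on_def by meson

lemma strict_total_on_least:
  assumes r: "strict_total_on S r" and "finite T" "T \<noteq> {}" "T \<subseteq> S"
  shows "\<exists>m\<in>T. \<forall>s\<in>T. s \<noteq> m \<longrightarrow> r m s"
  using assms(2-4)
proof (induction T rule: finite_ne_induct)
  case (insert x F)
  then obtain m where m: "m \<in> F" "\<forall>s\<in>F. s \<noteq> m \<longrightarrow> r m s" by auto
  have x: "x \<in> S" and mS: "m \<in> S" and "x \<noteq> m" using insert m by auto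
  then consider "r x m" | "r m x" using strict_total_on_total[OF r] by blast
  then show ?case
  proof cases
    case 1
    then have "r x s" if "s \<in> F" for s
      using m that strict_total_on_trans[OF r x mS] insert.prems by (cases "s = m") auto
    then show ?thesis by blast
  next
    case 2
    then show ?thesis using m by blast
  qed
qed simp

lemma strict_total_on_greatest:
  assumes "strict_total_on S r" and "finite T" "T \<noteq> {}" "T \<subseteq> S"
  shows "\<exists>m\<in>T. \<forall>s\<in>T. s \<noteq> m \<longrightarrow> r s m"
  using strict_total_on_least[OF strict_total_on_converse[OF assms(1)] assms(2-4)] .

definition clip :: "real \<Rightarrow> real \<Rightarrow> real" where
  "clip m r = max 0 (min r m)"

lemma clip_0 [simp]: "clip 0 r = 0"
  unfolding clip_def by simp

text \<open>\<open>clip m r - clip m (r - 1)\<close> is the length of \<open>[0, m] \<inter> [r - 1, r]\<close>.\<close>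

lemma clip_window:
  fixes m t C :: real and d :: int
  assumes m: "0 \<le> m"
  defines "r \<equiv> t - d - C"
  shows clip_window_below: "C + m \<le> t \<Longrightarrow> t - C \<le> 1 \<Longrightarrow>
      clip m r - clip m (r - 1) = (if d = 0 then m else 0)"
    and clip_window_straddle: "0 \<le> t - C \<Longrightarrow> t - C \<le> m \<Longrightarrow> m \<le> 1 \<Longrightarrow>
      clip m r - clip m (r - 1) = (if d = 0 then t - C else if d = -1 then m - (t - C) else 0)"
    and clip_window_above: "t \<le> C \<Longrightarrow> C + m \<le> 1 + t \<Longrightarrow>
      clip m r - clip m (r - 1) = (if d = -1 then m else 0)"
proof -
  have d: "d \<ge> 1 \<or> d = 0 \<or> d = -1 \<or> d \<le> -2" by linarith
  have "d \<ge> 1 \<Longrightarrow> real_of_int d \<ge> 1" "d \<le> -2 \<Longrightarrow> real_of_int d \<le> -2" by simp_all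
  then show "C + m \<le> t \<Longrightarrow> t - C \<le> 1 \<Longrightarrow> clip m r - clip m (r - 1) = (if d = 0 then m else 0)"
    and "0 \<le> t - C \<Longrightarrow> t - C \<le> m \<Longrightarrow> m \<le> 1 \<Longrightarrow>
      clip m r - clip m (r - 1) = (if d = 0 then t - C else if d = -1 then m - (t - C) else 0)"
    and "t \<le> C \<Longrightarrow> C + m \<le> 1 + t \<Longrightarrow> clip m r - clip m (r - 1) = (if d = -1 then m else 0)"
    using d m unfolding clip_def r_def by auto
qed

section \<open>The simplices \<open>Y\<^sub>\<gamma>\<close>\<close>

lemma A_fun_eq: "A_fun \<omega> u = \<omega> u + a_int \<omega> u"
  by (simp add: A_fun_def)

lemma A_fun_bounds: "0 < A_fun \<omega> u" "A_fun \<omega> u \<le> 1"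
  unfolding A_fun_def a_int_def by linarith+

locale Y_construction =
  fixes L :: "'a::euclidean_space set" and I :: "'i set" and Vt :: "'i \<Rightarrow> 'a set"
    and ord :: "'i \<Rightarrow> 'a \<Rightarrow> 'a \<Rightarrow> bool" and \<omega> :: "'a \<Rightarrow> real"
  assumes Lambda_complex: "Lambda_complex L I Vt ord" and linear_\<omega>: "linear \<omega>"
begin

abbreviation "A \<equiv> A_fun \<omega>"
abbreviation "a \<equiv> a_int \<omega>"
abbreviation "precA \<equiv> ordA \<omega> ord"
abbreviation "Y \<equiv> VtY \<omega> Vt ord"

lemma
  assumes "\<alpha> \<in> I"
  shows finite_Vt: "finite (Vt \<alpha>)" and card_Vt: "card (Vt \<alpha>) = DIM('a) + 1"
    and independent_Vt: "\<not> affine_dependent (Vt \<alpha>)"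
    and strict_total_ord: "strict_total_on (Vt \<alpha>) (ord \<alpha>)"
  using assms Lambda_complex unfolding Lambda_complex_def ordered_complex_def by meson+

lemma faces_Vt:
  "\<alpha> \<in> I \<Longrightarrow> \<beta> \<in> I \<Longrightarrow> convex hull (Vt \<alpha>) \<inter> convex hull (Vt \<beta>) = {} \<or>
     convex hull (Vt \<alpha>) \<inter> convex hull (Vt \<beta>) = convex hull (Vt \<alpha> \<inter> Vt \<beta>)"
  using Lambda_complex unfolding Lambda_complex_def by meson

lemma ord_agree:
  "\<alpha> \<in> I \<Longrightarrow> \<beta> \<in> I \<Longrightarrow> v \<in> Vt \<alpha> \<inter> Vt \<beta> \<Longrightarrow> w \<in> Vt \<alpha> \<inter> Vt \<beta> \<Longrightarrow> ord \<alpha> v w \<longleftrightarrow> ord \<beta> v w"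
  using Lambda_complex unfolding Lambda_complex_def by meson

lemma ord_translate:
  "\<alpha> \<in> I \<Longrightarrow> \<alpha>' \<in> I \<Longrightarrow> v \<in> Vt \<alpha> \<Longrightarrow> w \<in> Vt \<alpha> \<Longrightarrow> t \<in> L \<Longrightarrow>
     v + t \<in> Vt \<alpha>' \<Longrightarrow> w + t \<in> Vt \<alpha>' \<Longrightarrow> ord \<alpha> v w \<longleftrightarrow> ord \<alpha>' (v + t) (w + t)"
  using Lambda_complex unfolding Lambda_complex_def by meson

lemma translate_into_complex: "\<exists>x\<in>(\<Union>\<alpha>\<in>I. convex hull (Vt \<alpha>)). y - x \<in> L"
  using Lambda_complex unfolding Lambda_complex_def by meson

lemma interior_translate_eq:
  "\<alpha> \<in> I \<Longrightarrow> \<alpha>' \<in> I \<Longrightarrow> x \<in> interior (convex hull (Vt \<alpha>)) \<Longrightarrow>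
     x' \<in> interior (convex hull (Vt \<alpha>')) \<Longrightarrow> x - x' \<in> L \<Longrightarrow> x = x'"
  using Lambda_complex unfolding Lambda_complex_def by blast

lemma SpVt_translate:
  "\<alpha> \<in> I \<Longrightarrow> \<alpha>' \<in> I \<Longrightarrow> x \<in> convex hull (Vt \<alpha>) \<Longrightarrow> t \<in> L \<Longrightarrow> x + t \<in> convex hull (Vt \<alpha>') \<Longrightarrow>
     SpVt (Vt \<alpha>') (x + t) = (\<lambda>v. v + t) ` SpVt (Vt \<alpha>) x"
  using Lambda_complex unfolding Lambda_complex_def by meson

lemma bary_Vt:
  assumes "\<alpha> \<in> I" "x \<in> convex hull (Vt \<alpha>)"
  shows "(\<forall>c. c \<notin> Vt \<alpha> \<longrightarrow> bary (Vt \<alpha>) x c = 0) \<and> sum (bary (Vt \<alpha>) x) (Vt \<alpha>) = 1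
     \<and> (\<Sum>c\<in>Vt \<alpha>. bary (Vt \<alpha>) x c *\<^sub>R c) = x \<and> (\<forall>c. 0 \<le> bary (Vt \<alpha>) x c)"
  using bary_convex_hull[OF finite_Vt independent_Vt] assms by blast

lemma strict_total_precA: "\<alpha> \<in> I \<Longrightarrow> strict_total_on (Vt \<alpha>) (precA \<alpha>)"
  using strict_total_ord unfolding strict_total_on_def ordA_def by (smt (verit))

lemma precA_irrefl: "\<alpha> \<in> I \<Longrightarrow> u \<in> Vt \<alpha> \<Longrightarrow> \<not> precA \<alpha> u u"
  using strict_total_on_irrefl[OF strict_total_precA] .

lemma precA_trans:
  "\<alpha> \<in> I \<Longrightarrow> u \<in> Vt \<alpha> \<Longrightarrow> v \<in> Vt \<alpha> \<Longrightarrow> w \<in> Vt \<alpha> \<Longrightarrow> precA \<alpha> u v \<Longrightarrow> precA \<alpha> v w \<Longrightarrow> precA \<alpha> u w"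
  using strict_total_on_trans[OF strict_total_precA] .

lemma precA_asym: "\<alpha> \<in> I \<Longrightarrow> u \<in> Vt \<alpha> \<Longrightarrow> v \<in> Vt \<alpha> \<Longrightarrow> precA \<alpha> u v \<Longrightarrow> \<not> precA \<alpha> v u"
  using strict_total_on_asym[OF strict_total_precA] .

lemma precA_cases:
  assumes "\<alpha> \<in> I" "u \<in> Vt \<alpha>" "v \<in> Vt \<alpha>"
  obtains "precA \<alpha> u v" | "u = v" | "precA \<alpha> v u"
  using strict_total_on_total[OF strict_total_precA] assms by blast

lemma precA_agree:
  "\<alpha> \<in> I \<Longrightarrow> \<beta> \<in> I \<Longrightarrow> v \<in> Vt \<alpha> \<inter> Vt \<beta> \<Longrightarrow> w \<in> Vt \<alpha> \<inter> Vt \<beta> \<Longrightarrow> precA \<alpha> v w \<longleftrightarrow> precA \<beta> v w"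
  unfolding ordA_def using ord_agree by blast

definition seg_le :: "'i \<Rightarrow> 'a \<Rightarrow> 'a set" where
  "seg_le \<alpha> v = {u\<in>Vt \<alpha>. precA \<alpha> u v \<or> u = v}"

definition seg_ge :: "'i \<Rightarrow> 'a \<Rightarrow> 'a set" where
  "seg_ge \<alpha> v = {u\<in>Vt \<alpha>. precA \<alpha> v u \<or> u = v}"

lemma seg_le_Un_seg_ge: "\<alpha> \<in> I \<Longrightarrow> v \<in> Vt \<alpha> \<Longrightarrow> seg_le \<alpha> v \<union> seg_ge \<alpha> v = Vt \<alpha>"
  unfolding seg_le_def seg_ge_def by (blast elim: precA_cases)

lemma seg_le_Int_seg_ge: "\<alpha> \<in> I \<Longrightarrow> v \<in> Vt \<alpha> \<Longrightarrow> seg_le \<alpha> v \<inter> seg_ge \<alpha> v = {v}"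
  unfolding seg_le_def seg_ge_def using precA_asym by blast

lemma mem_seg_if_precA:
  assumes "\<alpha> \<in> I" "u \<in> Vt \<alpha>" "v \<in> Vt \<alpha>"
  shows "precA \<alpha> u v \<Longrightarrow> u \<in> seg_le \<alpha> v \<and> u \<notin> seg_ge \<alpha> v"
    and "precA \<alpha> v u \<Longrightarrow> u \<notin> seg_le \<alpha> v \<and> u \<in> seg_ge \<alpha> v"
  unfolding seg_le_def seg_ge_def using assms precA_asym precA_irrefl by blast+

lemma vertex_mem_segs: "v \<in> Vt \<alpha> \<Longrightarrow> v \<in> seg_le \<alpha> v \<and> v \<in> seg_ge \<alpha> v"
  unfolding seg_le_def seg_ge_def by blast

abbreviation "up u l \<equiv> (u, real_of_int (a u + l))"
abbreviation "lo u l \<equiv> (u, real_of_int (a u + l - 1))"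

lemma VtY_eq: "Y (\<alpha>, v, l) = (\<lambda>u. up u l) ` seg_le \<alpha> v \<union> (\<lambda>u. lo u l) ` seg_ge \<alpha> v"
  unfolding VtY_def seg_le_def seg_ge_def by auto

lemma mem_VtY:
  "(u, n) \<in> Y (\<alpha>, v, l) \<longleftrightarrow> (u \<in> seg_le \<alpha> v \<and> n = a u + l) \<or> (u \<in> seg_ge \<alpha> v \<and> n = a u + l - 1)"
  unfolding VtY_eq by auto

lemma fst_VtY: "\<rho> \<in> Y (\<alpha>, v, l) \<Longrightarrow> fst \<rho> \<in> Vt \<alpha>"
  unfolding VtY_eq seg_le_def seg_ge_def by auto

lemma finite_VtY: "\<alpha> \<in> I \<Longrightarrow> finite (Y (\<alpha>, v, l))"
  unfolding VtY_eq seg_le_def seg_ge_def using finite_Vt by auto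

lemma sum_VtY:
  assumes "\<alpha> \<in> I"
  shows "sum f (Y (\<alpha>, v, l)) = (\<Sum>u\<in>Vt \<alpha>.
     (if u \<in> seg_le \<alpha> v then f (up u l) else 0) + (if u \<in> seg_ge \<alpha> v then f (lo u l) else 0))"
proof -
  have fin: "finite (Vt \<alpha>)" using finite_Vt assms .
  have le: "seg_le \<alpha> v \<subseteq> Vt \<alpha>" and ge: "seg_ge \<alpha> v \<subseteq> Vt \<alpha>"
    unfolding seg_le_def seg_ge_def by auto
  have "sum f (Y (\<alpha>, v, l)) = sum f ((\<lambda>u. up u l) ` seg_le \<alpha> v) + sum f ((\<lambda>u. lo u l) ` seg_ge \<alpha> v)"
    unfolding VtY_eq using finite_subset[OF le fin] finite_subset[OF ge fin]
    by (intro sum.union_disjoint) auto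
  also have "\<dots> = sum (\<lambda>u. f (up u l)) (seg_le \<alpha> v) + sum (\<lambda>u. f (lo u l)) (seg_ge \<alpha> v)"
    by (simp add: sum.reindex inj_on_def)
  also have "\<dots> = (\<Sum>u\<in>Vt \<alpha>. if u \<in> seg_le \<alpha> v then f (up u l) else 0)
      + (\<Sum>u\<in>Vt \<alpha>. if u \<in> seg_ge \<alpha> v then f (lo u l) else 0)"
    using le ge by (simp add: sum.If_cases[OF fin] Int_absorb1)
  finally show ?thesis by (simp add: sum.distrib)
qed

definition proj_weight :: "('a \<times> real \<Rightarrow> real) \<Rightarrow> 'i \<Rightarrow> 'a \<Rightarrow> int \<Rightarrow> 'a \<Rightarrow> real" where
  "proj_weight \<mu> \<alpha> v l u =
     (if u \<in> seg_le \<alpha> v then \<mu> (up u l) else 0) + (if u \<in> seg_ge \<alpha> v then \<mu> (lo u l) else 0)"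

lemma proj_weight_outside: "u \<notin> Vt \<alpha> \<Longrightarrow> proj_weight \<mu> \<alpha> v l u = 0"
  unfolding proj_weight_def seg_le_def seg_ge_def by simp

lemma sum_proj_weight: "\<alpha> \<in> I \<Longrightarrow> sum \<mu> (Y (\<alpha>, v, l)) = sum (proj_weight \<mu> \<alpha> v l) (Vt \<alpha>)"
  unfolding sum_VtY proj_weight_def by simp

lemma fst_comb_VtY:
  "\<alpha> \<in> I \<Longrightarrow> fst (\<Sum>\<rho>\<in>Y (\<alpha>, v, l). \<mu> \<rho> *\<^sub>R \<rho>) = (\<Sum>u\<in>Vt \<alpha>. proj_weight \<mu> \<alpha> v l u *\<^sub>R u)"
  unfolding fst_sum sum_VtY proj_weight_def by (intro sum.cong refl) (simp add: scaleR_add_left)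

lemma snd_comb_VtY_segs:
  "\<alpha> \<in> I \<Longrightarrow> snd (\<Sum>\<rho>\<in>Y (\<alpha>, v, l). \<mu> \<rho> *\<^sub>R \<rho>) = (\<Sum>u\<in>Vt \<alpha>.
     (if u \<in> seg_le \<alpha> v then \<mu> (up u l) * (a u + l) else 0) +
     (if u \<in> seg_ge \<alpha> v then \<mu> (lo u l) * (a u + l - 1) else 0))"
  unfolding snd_sum sum_VtY by (intro sum.cong refl) auto

lemma proj_weight_cases:
  assumes "\<alpha> \<in> I" "u \<in> Vt \<alpha>" "v \<in> Vt \<alpha>"
  shows proj_weight_below: "precA \<alpha> u v \<Longrightarrow> proj_weight \<mu> \<alpha> v l u = \<mu> (up u l)"
    and proj_weight_above: "precA \<alpha> v u \<Longrightarrow> proj_weight \<mu> \<alpha> v l u = \<mu> (lo u l)"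
    and proj_weight_at: "proj_weight \<mu> \<alpha> v l v = \<mu> (up v l) + \<mu> (lo v l)"
  using mem_seg_if_precA[OF assms] vertex_mem_segs[OF assms(3)] unfolding proj_weight_def by simp_all

text \<open>An affine dependence projects to one of \<open>Vt \<alpha>\<close>, so it vanishes off the two lifts of \<open>v\<close>;
  these two have different heights.\<close>

lemma independent_VtY:
  assumes \<alpha>: "\<alpha> \<in> I" and v: "v \<in> Vt \<alpha>"
  shows "\<not> affine_dependent (Y (\<alpha>, v, l))"
proof
  let ?S = "Y (\<alpha>, v, l)"
  assume "affine_dependent ?S"
  then obtain \<mu> where \<mu>: "sum \<mu> ?S = 0" "\<exists>\<rho>\<in>?S. \<mu> \<rho> \<noteq> 0" "(\<Sum>\<rho>\<in>?S. \<mu> \<rho> *\<^sub>R \<rho>) = 0"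
    using affine_dependent_explicit_finite[OF finite_VtY[OF \<alpha>]] by blast
  have "sum (proj_weight \<mu> \<alpha> v l) (Vt \<alpha>) = 0" "(\<Sum>u\<in>Vt \<alpha>. proj_weight \<mu> \<alpha> v l u *\<^sub>R u) = 0"
    using \<mu>(1,3) sum_proj_weight[OF \<alpha>] fst_comb_VtY[OF \<alpha>, of \<mu> v l] by simp_all
  then have proj0: "\<forall>u\<in>Vt \<alpha>. proj_weight \<mu> \<alpha> v l u = 0"
    using independent_Vt[OF \<alpha>] affine_dependent_explicit_finite[OF finite_Vt[OF \<alpha>]] by blast
  have off_v: "(u \<in> seg_le \<alpha> v \<longrightarrow> \<mu> (up u l) = 0) \<and> (u \<in> seg_ge \<alpha> v \<longrightarrow> \<mu> (lo u l) = 0)"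
    if u: "u \<in> Vt \<alpha>" "u \<noteq> v" for u
    using precA_cases[OF \<alpha> u(1) v]
  proof cases
    case 1
    then show ?thesis
      using proj_weight_below[OF \<alpha> u(1) v 1, of \<mu> l] mem_seg_if_precA(1)[OF \<alpha> u(1) v 1] proj0 u by simp
  next
    case 3
    then show ?thesis
      using proj_weight_above[OF \<alpha> u(1) v 3, of \<mu> l] mem_seg_if_precA(2)[OF \<alpha> u(1) v 3] proj0 u by simp
  qed (use u in simp)
  let ?g = "\<lambda>u. (if u \<in> seg_le \<alpha> v then \<mu> (up u l) * (a u + l) else 0) +
                (if u \<in> seg_ge \<alpha> v then \<mu> (lo u l) * (a u + l - 1) else 0)"
  have "0 = sum ?g (Vt \<alpha>)" using \<mu>(3) snd_comb_VtY_segs[OF \<alpha>, of \<mu> v l] by simp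
  also have "\<dots> = sum ?g {v}"
    using off_v v by (intro sum.mono_neutral_right[OF finite_Vt[OF \<alpha>]]) auto
  also have "\<dots> = \<mu> (up v l) + (\<mu> (up v l) + \<mu> (lo v l)) * (a v + l - 1)"
    using vertex_mem_segs[OF v] by (simp add: algebra_simps)
  finally have "\<mu> (up v l) = 0" "\<mu> (lo v l) = 0"
    using proj0 v proj_weight_at[OF \<alpha> v v, of \<mu> l] by simp_all
  moreover obtain \<rho> where "\<rho> \<in> ?S" "\<mu> \<rho> \<noteq> 0" using \<mu>(2) by blast
  ultimately show False
    using off_v unfolding VtY_eq seg_le_def seg_ge_def by (cases "fst \<rho> = v") auto
qed

lemma card_VtY:
  assumes \<alpha>: "\<alpha> \<in> I" and v: "v \<in> Vt \<alpha>"
  shows "card (Y (\<alpha>, v, l)) = DIM('a \<times> real) + 1"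
proof -
  have fin: "finite (seg_le \<alpha> v)" "finite (seg_ge \<alpha> v)"
    using finite_Vt[OF \<alpha>] unfolding seg_le_def seg_ge_def by auto
  have "card (Y (\<alpha>, v, l)) = card ((\<lambda>u. up u l) ` seg_le \<alpha> v) + card ((\<lambda>u. lo u l) ` seg_ge \<alpha> v)"
    unfolding VtY_eq using fin by (intro card_Un_disjoint) auto
  also have "\<dots> = card (seg_le \<alpha> v) + card (seg_ge \<alpha> v)" by (simp add: card_image inj_on_def)
  also have "\<dots> = card (Vt \<alpha>) + 1"
    using card_Un_Int[OF fin] seg_le_Un_seg_ge[OF \<alpha> v] seg_le_Int_seg_ge[OF \<alpha> v] by simp
  finally show ?thesis using card_Vt[OF \<alpha>] by simp
qed

lemma strict_total_ordY:
  assumes \<alpha>: "\<alpha> \<in> I"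
  shows "strict_total_on (Y (\<alpha>, v, l)) (ordY ord (\<alpha>, v, l))"
proof -
  note ord = strict_total_onD[OF strict_total_ord[OF \<alpha>]]
  have ordY: "ordY ord (\<alpha>, v, l) \<rho> \<sigma> \<longleftrightarrow> ord \<alpha> (fst \<rho>) (fst \<sigma>) \<or> fst \<rho> = fst \<sigma> \<and> snd \<sigma> < snd \<rho>"
    for \<rho> \<sigma> unfolding ordY_def by simp
  show ?thesis unfolding strict_total_on_def ordY
  proof (intro conjI ballI impI)
    fix \<rho> assume "\<rho> \<in> Y (\<alpha>, v, l)"
    then show "\<not> (ord \<alpha> (fst \<rho>) (fst \<rho>) \<or> fst \<rho> = fst \<rho> \<and> snd \<rho> < snd \<rho>)"
      using ord(1) fst_VtY by auto
  next
    fix \<rho> \<sigma> \<kappa> assume "\<rho> \<in> Y (\<alpha>, v, l)" "\<sigma> \<in> Y (\<alpha>, v, l)" "\<kappa> \<in> Y (\<alpha>, v, l)"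
    then have in_Vt: "fst \<rho> \<in> Vt \<alpha>" "fst \<sigma> \<in> Vt \<alpha>" "fst \<kappa> \<in> Vt \<alpha>" using fst_VtY by auto
    assume \<rho>\<sigma>: "ord \<alpha> (fst \<rho>) (fst \<sigma>) \<or> fst \<rho> = fst \<sigma> \<and> snd \<sigma> < snd \<rho>"
      and \<sigma>\<kappa>: "ord \<alpha> (fst \<sigma>) (fst \<kappa>) \<or> fst \<sigma> = fst \<kappa> \<and> snd \<kappa> < snd \<sigma>"
    show "ord \<alpha> (fst \<rho>) (fst \<kappa>) \<or> fst \<rho> = fst \<kappa> \<and> snd \<kappa> < snd \<rho>"
    proof (cases "fst \<rho> = fst \<sigma>")
      case True
      then show ?thesis using \<rho>\<sigma> \<sigma>\<kappa> ord(1) in_Vt by auto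
    next
      case False
      then show ?thesis using \<rho>\<sigma> \<sigma>\<kappa> ord(2)[OF in_Vt] by auto
    qed
  next
    fix \<rho> \<sigma> assume "\<rho> \<in> Y (\<alpha>, v, l)" "\<sigma> \<in> Y (\<alpha>, v, l)" "\<rho> \<noteq> \<sigma>"
    then show "(ord \<alpha> (fst \<rho>) (fst \<sigma>) \<or> fst \<rho> = fst \<sigma> \<and> snd \<sigma> < snd \<rho>) \<or>
        (ord \<alpha> (fst \<sigma>) (fst \<rho>) \<or> fst \<sigma> = fst \<rho> \<and> snd \<rho> < snd \<sigma>)"
      using ord(3) fst_VtY by (cases "fst \<rho> = fst \<sigma>") (auto simp: prod_eq_iff)
  qed
qed

section \<open>Canonical barycentric coordinates\<close>

definition mass_below :: "('a \<Rightarrow> real) \<Rightarrow> 'i \<Rightarrow> 'a \<Rightarrow> real" where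
  "mass_below lam \<alpha> u = (\<Sum>w\<in>{w\<in>Vt \<alpha>. precA \<alpha> w u}. lam w)"

lemma mass_below_sum_if:
  "\<alpha> \<in> I \<Longrightarrow> mass_below lam \<alpha> u = (\<Sum>w\<in>Vt \<alpha>. if precA \<alpha> w u then lam w else 0)"
  unfolding mass_below_def by (simp add: sum.inter_filter[OF finite_Vt])

lemma mass_below_nonneg: "(\<And>w. w \<in> Vt \<alpha> \<Longrightarrow> 0 \<le> lam w) \<Longrightarrow> 0 \<le> mass_below lam \<alpha> u"
  unfolding mass_below_def by (rule sum_nonneg) auto

lemma mass_below_insert:
  assumes \<alpha>: "\<alpha> \<in> I" and u: "u \<in> Vt \<alpha>"
  shows "mass_below lam \<alpha> u + lam u = sum lam (insert u {w\<in>Vt \<alpha>. precA \<alpha> w u})"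
  using finite_Vt[OF \<alpha>] precA_irrefl[OF \<alpha> u] unfolding mass_below_def by simp

lemma mass_below_add_le_1:
  assumes \<alpha>: "\<alpha> \<in> I" and u: "u \<in> Vt \<alpha>" and nonneg: "\<And>w. w \<in> Vt \<alpha> \<Longrightarrow> 0 \<le> lam w"
    and sum1: "sum lam (Vt \<alpha>) = 1"
  shows "mass_below lam \<alpha> u + lam u \<le> 1"
proof -
  have "sum lam (insert u {w\<in>Vt \<alpha>. precA \<alpha> w u}) \<le> sum lam (Vt \<alpha>)"
    by (rule sum_mono2[OF finite_Vt[OF \<alpha>]]) (use u nonneg in auto)
  then show ?thesis using mass_below_insert[OF \<alpha> u] sum1 by simp
qed

lemma mass_below_mono:
  assumes \<alpha>: "\<alpha> \<in> I" and u: "u \<in> Vt \<alpha>" and v: "v \<in> Vt \<alpha>"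
    and nonneg: "\<And>w. w \<in> Vt \<alpha> \<Longrightarrow> 0 \<le> lam w" and uv: "precA \<alpha> u v"
  shows "mass_below lam \<alpha> u + lam u \<le> mass_below lam \<alpha> v"
proof -
  have "sum lam (insert u {w\<in>Vt \<alpha>. precA \<alpha> w u}) \<le> mass_below lam \<alpha> v"
    unfolding mass_below_def
    by (rule sum_mono2) (use finite_Vt[OF \<alpha>] u uv nonneg precA_trans[OF \<alpha> _ u v] in auto)
  then show ?thesis using mass_below_insert[OF \<alpha> u] by simp
qed

definition height :: "'i \<Rightarrow> 'a \<times> real \<Rightarrow> real" where
  "height \<alpha> z = snd z - (\<Sum>u\<in>Vt \<alpha>. bary (Vt \<alpha>) (fst z) u * a u)"

lemma bary_VtY:
  assumes "\<alpha> \<in> I" "v \<in> Vt \<alpha>" "z \<in> convex hull (Y (\<alpha>, v, l))"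
  shows "(\<forall>c. c \<notin> Y (\<alpha>, v, l) \<longrightarrow> bary (Y (\<alpha>, v, l)) z c = 0) \<and> sum (bary (Y (\<alpha>, v, l)) z) (Y (\<alpha>, v, l)) = 1
     \<and> (\<Sum>c\<in>Y (\<alpha>, v, l). bary (Y (\<alpha>, v, l)) z c *\<^sub>R c) = z \<and> (\<forall>c. 0 \<le> bary (Y (\<alpha>, v, l)) z c)"
  using bary_convex_hull[OF finite_VtY independent_VtY] assms by blast

lemma snd_comb_VtY:
  fixes \<mu> :: "'a \<times> real \<Rightarrow> real" and l :: int
  assumes \<alpha>: "\<alpha> \<in> I" and v: "v \<in> Vt \<alpha>"
  defines "lam \<equiv> proj_weight \<mu> \<alpha> v l"
  shows "snd (\<Sum>\<rho>\<in>Y (\<alpha>, v, l). \<mu> \<rho> *\<^sub>R \<rho>) =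
    (\<Sum>u\<in>Vt \<alpha>. lam u * a u) + (real_of_int l - 1) * sum lam (Vt \<alpha>) + mass_below lam \<alpha> v + \<mu> (up v l)"
proof -
  have split: "(if u \<in> seg_le \<alpha> v then \<mu> (up u l) * (a u + l) else 0) +
      (if u \<in> seg_ge \<alpha> v then \<mu> (lo u l) * (a u + l - 1) else 0) =
      lam u * a u + (l - 1) * lam u + (if precA \<alpha> u v then lam u else 0) + (if u = v then \<mu> (up v l) else 0)"
    if u: "u \<in> Vt \<alpha>" for u
    using precA_cases[OF \<alpha> u v]
  proof cases
    case 1
    then show ?thesis using proj_weight_below[OF \<alpha> u v 1] mem_seg_if_precA(1)[OF \<alpha> u v 1]
        precA_irrefl[OF \<alpha> u] unfolding lam_def by (auto simp: algebra_simps)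
  next
    case 2
    then show ?thesis using proj_weight_at[OF \<alpha> v v] vertex_mem_segs[OF v] precA_irrefl[OF \<alpha> v]
      unfolding lam_def by (simp add: algebra_simps)
  next
    case 3
    then show ?thesis using proj_weight_above[OF \<alpha> u v 3] mem_seg_if_precA(2)[OF \<alpha> u v 3]
        precA_asym[OF \<alpha> v u 3] precA_irrefl[OF \<alpha> u] unfolding lam_def by (auto simp: algebra_simps)
  qed
  show ?thesis
    unfolding snd_comb_VtY_segs[OF \<alpha>] using finite_Vt[OF \<alpha>] v
    by (simp add: split sum.distrib sum_distrib_left mass_below_sum_if[OF \<alpha>])
qed

lemma
  assumes \<alpha>: "\<alpha> \<in> I" and v: "v \<in> Vt \<alpha>" and z: "z \<in> convex hull (Y (\<alpha>, v, l))"
  defines "\<mu> \<equiv> bary (Y (\<alpha>, v, l)) z"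
  shows bary_fst_VtY: "bary (Vt \<alpha>) (fst z) = proj_weight \<mu> \<alpha> v l"
    and height_VtY: "height \<alpha> z = real_of_int l - 1 + mass_below (proj_weight \<mu> \<alpha> v l) \<alpha> v + \<mu> (up v l)"
proof -
  note \<mu> = bary_VtY[OF \<alpha> v z, folded \<mu>_def]
  have sum1: "sum (proj_weight \<mu> \<alpha> v l) (Vt \<alpha>) = 1" using \<mu> sum_proj_weight[OF \<alpha>] by metis
  show proj: "bary (Vt \<alpha>) (fst z) = proj_weight \<mu> \<alpha> v l"
    by (rule bary_eqI[OF finite_Vt[OF \<alpha>] independent_Vt[OF \<alpha>] proj_weight_outside sum1])
      (use \<mu> fst_comb_VtY[OF \<alpha>, of \<mu> v l] in simp_all)
  show "height \<alpha> z = real_of_int l - 1 + mass_below (proj_weight \<mu> \<alpha> v l) \<alpha> v + \<mu> (up v l)"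
    using \<mu> snd_comb_VtY[OF \<alpha> v, of \<mu> l] unfolding height_def proj sum1 by simp
qed

lemma fst_convex_hull_VtY:
  assumes "z \<in> convex hull (Y (\<alpha>, v, l))"
  shows "fst z \<in> convex hull (Vt \<alpha>)"
proof -
  have "fst z \<in> convex hull (fst ` Y (\<alpha>, v, l))"
    using assms convex_hull_linear_image[OF linear_fst] by blast
  also have "\<dots> \<subseteq> convex hull (Vt \<alpha>)" by (rule hull_mono) (auto dest: fst_VtY)
  finally show ?thesis .
qed

lemma bary_VtY_vertex:
  assumes \<alpha>: "\<alpha> \<in> I" and v: "v \<in> Vt \<alpha>" and z: "z \<in> convex hull (Y (\<alpha>, v, l))" and u: "u \<in> Vt \<alpha>"
  defines "\<mu> \<equiv> bary (Y (\<alpha>, v, l)) z"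
  defines "lam \<equiv> proj_weight \<mu> \<alpha> v l"
  shows "\<mu> (u, real_of_int (a u + m)) =
    (if precA \<alpha> u v then (if m = l then lam u else 0)
     else if u = v then (if m = l then \<mu> (up v l) else if m = l - 1 then lam v - \<mu> (up v l) else 0)
     else (if m = l - 1 then lam u else 0))"
proof -
  have outside: "\<mu> \<rho> = 0" if "\<rho> \<notin> Y (\<alpha>, v, l)" for \<rho>
    using bary_VtY[OF \<alpha> v z] that unfolding \<mu>_def by blast
  show ?thesis
    using precA_cases[OF \<alpha> u v]
  proof cases
    case 1
    then show ?thesis
      using proj_weight_below[OF \<alpha> u v 1, of \<mu> l] mem_seg_if_precA(1)[OF \<alpha> u v 1]
        outside[of "(u, real_of_int (a u + m))"] unfolding mem_VtY lam_def by (auto simp: add_diff_eq)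
  next
    case 2
    then show ?thesis
      using proj_weight_at[OF \<alpha> v v, of \<mu> l] vertex_mem_segs[OF v] precA_irrefl[OF \<alpha> v]
        outside[of "(u, real_of_int (a u + m))"] unfolding mem_VtY lam_def by (auto simp: add_diff_eq)
  next
    case 3
    then show ?thesis
      using proj_weight_above[OF \<alpha> u v 3, of \<mu> l] mem_seg_if_precA(2)[OF \<alpha> u v 3]
        precA_asym[OF \<alpha> v u 3] precA_irrefl[OF \<alpha> u]
        outside[of "(u, real_of_int (a u + m))"] unfolding mem_VtY lam_def by (auto simp: add_diff_eq)
  qed
qed

text \<open>The weight of \<open>(u, a u + m)\<close> is the length of \<open>[m + C, m + C + lam u] \<inter> [h, h + 1]\<close>,
  where \<open>C = mass_below lam \<alpha> u\<close> and \<open>h = height \<alpha> z\<close>.\<close>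

definition canon_bary :: "'i \<Rightarrow> 'a \<times> real \<Rightarrow> 'a \<times> real \<Rightarrow> real" where
  "canon_bary \<alpha> z \<rho> =
     (let lam = bary (Vt \<alpha>) (fst z); u = fst \<rho>; m = snd \<rho> - a u;
          r = height \<alpha> z - m - mass_below lam \<alpha> u + 1
      in if m \<in> \<int> then clip (lam u) r - clip (lam u) (r - 1) else 0)"

lemma canon_bary_VtY_vertex:
  assumes \<alpha>: "\<alpha> \<in> I" and v: "v \<in> Vt \<alpha>" and z: "z \<in> convex hull (Y (\<alpha>, v, l))" and u: "u \<in> Vt \<alpha>"
  defines "\<mu> \<equiv> bary (Y (\<alpha>, v, l)) z"
  defines "lam \<equiv> proj_weight \<mu> \<alpha> v l"
  shows "canon_bary \<alpha> z (u, real_of_int (a u + m)) =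
    (if precA \<alpha> u v then (if m = l then lam u else 0)
     else if u = v then (if m = l then \<mu> (up v l) else if m = l - 1 then lam v - \<mu> (up v l) else 0)
     else (if m = l - 1 then lam u else 0))"
proof -
  note \<mu> = bary_VtY[OF \<alpha> v z, folded \<mu>_def]
  define t where "t = mass_below lam \<alpha> v + \<mu> (up v l)"
  define C where "C = mass_below lam \<alpha> u"
  have lam: "bary (Vt \<alpha>) (fst z) = lam" using bary_fst_VtY[OF \<alpha> v z] unfolding lam_def \<mu>_def .
  have nonneg: "0 \<le> lam w" for w using \<mu> unfolding lam_def proj_weight_def by simp
  have sum1: "sum lam (Vt \<alpha>) = 1" using \<mu> sum_proj_weight[OF \<alpha>] unfolding lam_def by metis
  have lam_v: "lam v = \<mu> (up v l) + \<mu> (lo v l)" using proj_weight_at[OF \<alpha> v v] unfolding lam_def .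
  have t: "mass_below lam \<alpha> v \<le> t" "t \<le> mass_below lam \<alpha> v + lam v"
    using \<mu> lam_v unfolding t_def by auto
  have le_1: "mass_below lam \<alpha> w + lam w \<le> 1" if "w \<in> Vt \<alpha>" for w
    using mass_below_add_le_1[OF \<alpha> that _ sum1] nonneg by blast
  have C0: "0 \<le> C" "0 \<le> mass_below lam \<alpha> v" unfolding C_def using mass_below_nonneg nonneg by auto
  have canon: "canon_bary \<alpha> z (u, real_of_int (a u + m)) =
      clip (lam u) (t - real_of_int (m - l) - C) - clip (lam u) (t - real_of_int (m - l) - C - 1)"
    using height_VtY[OF \<alpha> v z]
    unfolding canon_bary_def Let_def lam C_def t_def \<mu>_def[symmetric] lam_def[symmetric]
    by (simp add: algebra_simps)
  show ?thesis
    using precA_cases[OF \<alpha> u v]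
  proof cases
    case 1
    have "C + lam u \<le> mass_below lam \<alpha> v" unfolding C_def by (rule mass_below_mono[OF \<alpha> u v nonneg 1])
    then have "C + lam u \<le> t" "t - C \<le> 1" using t le_1[OF v] C0 by linarith+
    then show ?thesis using canon clip_window_below[where m="lam u" and d="m - l", OF nonneg] 1 by simp
  next
    case 2
    have "0 \<le> t - C" "t - C \<le> lam u" "lam u \<le> 1"
      using 2 t le_1[OF v] C0 unfolding C_def by auto
    moreover have "t - C = \<mu> (up v l)" using 2 unfolding t_def C_def by simp
    ultimately show ?thesis
      using canon clip_window_straddle[where m="lam u" and d="m - l", OF nonneg] 2 precA_irrefl[OF \<alpha> v]
      by simp
  next
    case 3
    have "mass_below lam \<alpha> v + lam v \<le> C" unfolding C_def by (rule mass_below_mono[OF \<alpha> v u nonneg 3])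
    then have "t \<le> C" "C + lam u \<le> 1 + t" using t le_1[OF u] C0 unfolding C_def by linarith+
    then show ?thesis
      using canon clip_window_above[where m="lam u" and d="m - l", OF nonneg] 3
        precA_asym[OF \<alpha> v u 3] precA_irrefl[OF \<alpha> u] by auto
  qed
qed

lemma bary_VtY_eq_canon:
  assumes \<alpha>: "\<alpha> \<in> I" and v: "v \<in> Vt \<alpha>" and z: "z \<in> convex hull (Y (\<alpha>, v, l))"
  shows "bary (Y (\<alpha>, v, l)) z = canon_bary \<alpha> z"
proof
  fix \<rho> :: "'a \<times> real"
  obtain u n where \<rho>: "\<rho> = (u, n)" by fastforce
  have outside: "bary (Y (\<alpha>, v, l)) z \<rho> = 0" if "\<rho> \<notin> Y (\<alpha>, v, l)"
    using bary_VtY[OF \<alpha> v z] that by blast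
  show "bary (Y (\<alpha>, v, l)) z \<rho> = canon_bary \<alpha> z \<rho>"
  proof (cases "n - a u \<in> \<int>")
    case False
    have "n \<noteq> real_of_int (a u + k)" for k using False by auto
    from this[of l] this[of "l - 1"] have "\<rho> \<notin> Y (\<alpha>, v, l)"
      unfolding \<rho> mem_VtY by (simp add: add_diff_eq)
    then show ?thesis using outside False unfolding canon_bary_def \<rho> by simp
  next
    case True
    then obtain m where "n - a u = real_of_int m" by (rule Ints_cases)
    then have m: "n = real_of_int (a u + m)" by simp
    show ?thesis
    proof (cases "u \<in> Vt \<alpha>")
      case False
      then have "\<rho> \<notin> Y (\<alpha>, v, l)" using fst_VtY unfolding \<rho> by (metis fst_conv)
      moreover have "bary (Vt \<alpha>) (fst z) u = 0"
        using bary_Vt[OF \<alpha> fst_convex_hull_VtY[OF z]] False by blast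
      ultimately show ?thesis using outside unfolding canon_bary_def \<rho> Let_def by simp
    next
      case True
      then show ?thesis
        using bary_VtY_vertex[OF \<alpha> v z True, of m] canon_bary_VtY_vertex[OF \<alpha> v z True, of m]
        unfolding \<rho> m by simp
    qed
  qed
qed

section \<open>Common faces and lattice translates\<close>

lemma bary_Vt_agree:
  assumes \<alpha>: "\<alpha> \<in> I" and \<beta>: "\<beta> \<in> I"
    and x\<alpha>: "x \<in> convex hull (Vt \<alpha>)" and x\<beta>: "x \<in> convex hull (Vt \<beta>)"
  shows "bary (Vt \<alpha>) x = bary (Vt \<beta>) x"
proof -
  have x: "x \<in> convex hull (Vt \<alpha> \<inter> Vt \<beta>)" using faces_Vt[OF \<alpha> \<beta>] x\<alpha> x\<beta> by blast
  show ?thesis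
    using bary_subset[OF finite_Vt[OF \<alpha>] independent_Vt[OF \<alpha>] _ x]
      bary_subset[OF finite_Vt[OF \<beta>] independent_Vt[OF \<beta>] _ x] by simp
qed

lemma height_agree:
  assumes \<alpha>: "\<alpha> \<in> I" and \<beta>: "\<beta> \<in> I"
    and x\<alpha>: "fst z \<in> convex hull (Vt \<alpha>)" and x\<beta>: "fst z \<in> convex hull (Vt \<beta>)"
  shows "height \<alpha> z = height \<beta> z"
proof -
  define lam where "lam = bary (Vt \<alpha>) (fst z)"
  have lam\<beta>: "bary (Vt \<beta>) (fst z) = lam" using bary_Vt_agree[OF \<alpha> \<beta> x\<alpha> x\<beta>] lam_def by simp
  have "(\<Sum>u\<in>Vt \<alpha>. lam u * a u) = (\<Sum>u\<in>Vt \<beta>. lam u * a u)"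
    using bary_Vt[OF \<alpha> x\<alpha>] bary_Vt[OF \<beta> x\<beta>] finite_Vt[OF \<alpha>] finite_Vt[OF \<beta>]
    unfolding lam_def[symmetric] lam\<beta> by (intro sum.mono_neutral_cong) auto
  then show ?thesis unfolding height_def lam\<beta> lam_def[symmetric] by simp
qed

lemma canon_bary_agree:
  assumes \<alpha>: "\<alpha> \<in> I" and \<beta>: "\<beta> \<in> I"
    and x\<alpha>: "fst z \<in> convex hull (Vt \<alpha>)" and x\<beta>: "fst z \<in> convex hull (Vt \<beta>)"
  shows "canon_bary \<alpha> z = canon_bary \<beta> z"
proof
  fix \<rho> :: "'a \<times> real"
  define lam where "lam = bary (Vt \<alpha>) (fst z)"
  have lam\<beta>: "bary (Vt \<beta>) (fst z) = lam" using bary_Vt_agree[OF \<alpha> \<beta> x\<alpha> x\<beta>] lam_def by simp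
  have zero\<alpha>: "c \<notin> Vt \<alpha> \<Longrightarrow> lam c = 0" and zero\<beta>: "c \<notin> Vt \<beta> \<Longrightarrow> lam c = 0" for c
    using bary_Vt[OF \<alpha> x\<alpha>] bary_Vt[OF \<beta> x\<beta>] unfolding lam_def[symmetric] lam\<beta> by blast+
  have mass_below_eq: "mass_below lam \<alpha> u = mass_below lam \<beta> u" if "lam u \<noteq> 0" for u
  proof -
    have u: "u \<in> Vt \<alpha>" "u \<in> Vt \<beta>" using that zero\<alpha> zero\<beta> by blast+
    show ?thesis unfolding mass_below_sum_if[OF \<alpha>] mass_below_sum_if[OF \<beta>]
      using finite_Vt[OF \<alpha>] finite_Vt[OF \<beta>] zero\<alpha> zero\<beta> precA_agree[OF \<alpha> \<beta>] u
      by (intro sum.mono_neutral_cong) auto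
  qed
  show "canon_bary \<alpha> z \<rho> = canon_bary \<beta> z \<rho>"
    using mass_below_eq[of "fst \<rho>"] height_agree[OF \<alpha> \<beta> x\<alpha> x\<beta>]
    unfolding canon_bary_def Let_def lam\<beta> lam_def[symmetric] by (cases "lam (fst \<rho>) = 0") simp_all
qed

lemma faces_VtY:
  fixes l l' :: int
  assumes \<alpha>: "\<alpha> \<in> I" and v: "v \<in> Vt \<alpha>" and \<beta>: "\<beta> \<in> I" and w: "w \<in> Vt \<beta>"
  defines "S \<equiv> Y (\<alpha>, v, l)" and "S' \<equiv> Y (\<beta>, w, l')"
  shows "convex hull S \<inter> convex hull S' = {} \<or> convex hull S \<inter> convex hull S' = convex hull (S \<inter> S')"
proof -
  have "z \<in> convex hull (S \<inter> S')" if z: "z \<in> convex hull S" and z': "z \<in> convex hull S'" for z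
  proof -
    have eq: "bary S z = bary S' z"
      using bary_VtY_eq_canon[OF \<alpha> v z[unfolded S_def]] bary_VtY_eq_canon[OF \<beta> w z'[unfolded S'_def]]
        canon_bary_agree[OF \<alpha> \<beta> fst_convex_hull_VtY fst_convex_hull_VtY] z z'
      unfolding S_def S'_def by metis
    note hS = bary_VtY[OF \<alpha> v z[unfolded S_def], folded S_def]
    have zero: "c \<notin> S' \<Longrightarrow> bary S z c = 0" for c
      using bary_VtY[OF \<beta> w z'[unfolded S'_def], folded S'_def] eq by (simp del: split_paired_All)
    have fin: "finite S" unfolding S_def using finite_VtY[OF \<alpha>] .
    have "\<forall>c\<in>S - S \<inter> S'. bary S z c = 0" using zero by blast
    then have "sum (bary S z) (S \<inter> S') = sum (bary S z) S"
      "(\<Sum>c\<in>S \<inter> S'. bary S z c *\<^sub>R c) = (\<Sum>c\<in>S. bary S z c *\<^sub>R c)"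
      by (simp_all add: sum.mono_neutral_left[OF fin Int_lower1])
    then have "sum (bary S z) (S \<inter> S') = 1" "(\<Sum>c\<in>S \<inter> S'. bary S z c *\<^sub>R c) = z"
      using hS by simp_all
    then show ?thesis
      unfolding convex_hull_finite[OF finite_Int[OF disjI1[OF fin]]] using hS by blast
  qed
  then show ?thesis using hull_mono[of "S \<inter> S'" S] hull_mono[of "S \<inter> S'" S'] by blast
qed

lemma bary_translate:
  assumes \<alpha>: "\<alpha> \<in> I" and \<alpha>': "\<alpha>' \<in> I" and x: "x \<in> convex hull (Vt \<alpha>)" and t: "t \<in> L"
    and x': "x + t \<in> convex hull (Vt \<alpha>')"
  shows "bary (Vt \<alpha>') (x + t) = (\<lambda>w. bary (Vt \<alpha>) x (w - t))"
proof -
  define lam where "lam = bary (Vt \<alpha>) x"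
  note lam = bary_Vt[OF \<alpha> x, folded lam_def]
  have supp: "w - t \<in> Vt \<alpha> \<and> w \<in> Vt \<alpha>'" if "lam (w - t) \<noteq> 0" for w
  proof -
    have "0 < lam (w - t)" using lam that by (simp add: order_less_le)
    then have "w - t \<in> SpVt (Vt \<alpha>) x"
      using SpVt_convex_hull[OF finite_Vt[OF \<alpha>] independent_Vt[OF \<alpha>] x] lam_def by simp
    then have "w \<in> SpVt (Vt \<alpha>') (x + t)"
      unfolding SpVt_translate[OF \<alpha> \<alpha>' x t x'] by (rule rev_image_eqI) simp
    then show ?thesis using lam that unfolding SpVt_def by auto
  qed
  then have zero: "\<And>w. w \<notin> Vt \<alpha>' \<Longrightarrow> lam (w - t) = 0" by blast
  show ?thesis unfolding lam_def[symmetric]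
  proof (rule bary_eqI[OF finite_Vt[OF \<alpha>'] independent_Vt[OF \<alpha>'] zero])
    have "sum (\<lambda>w. lam (w - t)) (Vt \<alpha>') = (\<Sum>u\<in>Vt \<alpha>. lam (u + t - t))"
      by (rule sum_translate[OF finite_Vt[OF \<alpha>] finite_Vt[OF \<alpha>']]) (use zero supp in auto)
    then show "sum (\<lambda>w. lam (w - t)) (Vt \<alpha>') = 1" using lam by simp
    have "(\<Sum>w\<in>Vt \<alpha>'. lam (w - t) *\<^sub>R w) = (\<Sum>u\<in>Vt \<alpha>. lam (u + t - t) *\<^sub>R (u + t))"
      by (rule sum_translate[OF finite_Vt[OF \<alpha>] finite_Vt[OF \<alpha>']]) (use zero supp in auto)
    also have "\<dots> = (\<Sum>u\<in>Vt \<alpha>. lam u *\<^sub>R u) + (\<Sum>u\<in>Vt \<alpha>. lam u) *\<^sub>R t"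
      by (simp add: scaleR_add_right sum.distrib scaleR_sum_left)
    finally show "(\<Sum>w\<in>Vt \<alpha>'. lam (w - t) *\<^sub>R w) = x + t" using lam by simp
  qed
qed

definition wraps :: "'a \<Rightarrow> 'a \<Rightarrow> bool" where
  "wraps t u \<longleftrightarrow> 1 < A u + frac (\<omega> t)"

lemma a_int_translate: "a (u + t) = a u - \<lfloor>\<omega> t\<rfloor> - (if wraps t u then 1 else 0)"
proof -
  have "\<lceil>\<omega> u + \<omega> t\<rceil> = \<lceil>\<omega> u\<rceil> + \<lfloor>\<omega> t\<rfloor> + (if wraps t u then 1 else 0)"
  proof (rule ceiling_unique)
    have "\<omega> u \<le> of_int \<lceil>\<omega> u\<rceil>" "of_int \<lceil>\<omega> u\<rceil> - 1 < \<omega> u"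
      "of_int \<lfloor>\<omega> t\<rfloor> \<le> \<omega> t" "\<omega> t < of_int \<lfloor>\<omega> t\<rfloor> + 1" by linarith+
    moreover have "wraps t u \<longleftrightarrow> 0 < \<omega> u - of_int \<lceil>\<omega> u\<rceil> + frac (\<omega> t)"
      unfolding wraps_def A_fun_def a_int_def by (simp add: algebra_simps)
    ultimately show "of_int (\<lceil>\<omega> u\<rceil> + \<lfloor>\<omega> t\<rfloor> + (if wraps t u then 1 else 0)) - 1 < \<omega> u + \<omega> t"
      and "\<omega> u + \<omega> t \<le> of_int (\<lceil>\<omega> u\<rceil> + \<lfloor>\<omega> t\<rfloor> + (if wraps t u then 1 else 0))"
      unfolding frac_def by (cases "wraps t u"; simp; linarith)+
  qed
  then show ?thesis unfolding a_int_def linear_add[OF linear_\<omega>] by simp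
qed

lemma A_fun_translate: "A (u + t) = A u + frac (\<omega> t) - (if wraps t u then 1 else 0)"
  unfolding A_fun_eq a_int_translate linear_add[OF linear_\<omega>] frac_def by (cases "wraps t u") simp_all

lemma precA_translate:
  assumes \<alpha>: "\<alpha> \<in> I" and \<alpha>': "\<alpha>' \<in> I" and t: "t \<in> L"
    and u: "u \<in> Vt \<alpha>" "u + t \<in> Vt \<alpha>'" and w: "w \<in> Vt \<alpha>" "w + t \<in> Vt \<alpha>'"
  shows "precA \<alpha>' (w + t) (u + t) \<longleftrightarrow> (wraps t w \<and> \<not> wraps t u) \<or> (wraps t w = wraps t u \<and> precA \<alpha> w u)"
proof -
  have "ord \<alpha>' (w + t) (u + t) \<longleftrightarrow> ord \<alpha> w u" using ord_translate[OF \<alpha> \<alpha>' w(1) u(1) t w(2) u(2)] by simp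
  then show ?thesis
    using A_fun_bounds[of \<omega> u] A_fun_bounds[of \<omega> w] frac_lt_1[of "\<omega> t"] frac_ge_0[of "\<omega> t"]
    unfolding ordA_def A_fun_translate wraps_def by auto
qed

definition wrapped_mass :: "'i \<Rightarrow> 'a \<Rightarrow> 'a \<Rightarrow> real" where
  "wrapped_mass \<alpha> x t = (\<Sum>w\<in>Vt \<alpha>. if wraps t w then bary (Vt \<alpha>) x w else 0)"

lemma mass_below_translate:
  assumes \<alpha>: "\<alpha> \<in> I" and \<alpha>': "\<alpha>' \<in> I" and x: "x \<in> convex hull (Vt \<alpha>)" and t: "t \<in> L"
    and x': "x + t \<in> convex hull (Vt \<alpha>')" and u: "bary (Vt \<alpha>) x u \<noteq> 0"
  shows "mass_below (bary (Vt \<alpha>') (x + t)) \<alpha>' (u + t) =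
    mass_below (bary (Vt \<alpha>) x) \<alpha> u + wrapped_mass \<alpha> x t - (if wraps t u then 1 else 0)"
proof -
  define lam where "lam = bary (Vt \<alpha>) x"
  note lam = bary_Vt[OF \<alpha> x, folded lam_def]
  have lam': "bary (Vt \<alpha>') (x + t) w = lam (w - t)" for w
    using bary_translate[OF \<alpha> \<alpha>' x t x'] unfolding lam_def by simp
  have supp: "w \<in> Vt \<alpha> \<and> w + t \<in> Vt \<alpha>'" if "lam w \<noteq> 0" for w
    using that lam bary_Vt[OF \<alpha>' x'] lam'[of "w + t"] by fastforce
  have u': "u \<in> Vt \<alpha>" "u + t \<in> Vt \<alpha>'" using supp u unfolding lam_def by blast+
  have "mass_below (bary (Vt \<alpha>') (x + t)) \<alpha>' (u + t) =
      (\<Sum>w\<in>Vt \<alpha>'. if precA \<alpha>' w (u + t) then lam (w - t) else 0)"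
    unfolding mass_below_sum_if[OF \<alpha>'] lam' ..
  also have "\<dots> = (\<Sum>w\<in>Vt \<alpha>. if precA \<alpha>' (w + t) (u + t) then lam (w + t - t) else 0)"
    by (rule sum_translate[OF finite_Vt[OF \<alpha>] finite_Vt[OF \<alpha>']]) (use supp[of "_ - t"] in \<open>auto split: if_splits\<close>)
  also have "\<dots> = (\<Sum>w\<in>Vt \<alpha>. if (wraps t w \<and> \<not> wraps t u) \<or> (wraps t w = wraps t u \<and> precA \<alpha> w u)
      then lam w else 0)"
    using precA_translate[OF \<alpha> \<alpha>' t u'] supp by (intro sum.cong) auto
  also have "\<dots> = mass_below lam \<alpha> u + wrapped_mass \<alpha> x t - (if wraps t u then 1 else 0)"
  proof -
    have "wraps t w \<Longrightarrow> \<not> wraps t u \<Longrightarrow> \<not> precA \<alpha> w u"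
      and "\<not> wraps t w \<Longrightarrow> wraps t u \<Longrightarrow> precA \<alpha> w u" for w
      using A_fun_bounds[of \<omega> u] A_fun_bounds[of \<omega> w] unfolding wraps_def ordA_def by auto
    then have "(if (wraps t w \<and> \<not> wraps t u) \<or> (wraps t w = wraps t u \<and> precA \<alpha> w u) then lam w else 0) =
        (if precA \<alpha> w u then lam w else 0) + (if wraps t w then lam w else 0)
        - (if wraps t u then lam w else 0)" for w
      by auto
    then show ?thesis
      using lam unfolding mass_below_sum_if[OF \<alpha>] wrapped_mass_def lam_def[symmetric]
      by (simp add: sum.distrib sum_subtractf)
  qed
  finally show ?thesis unfolding lam_def .
qed

lemma height_translate:
  assumes \<alpha>: "\<alpha> \<in> I" and \<alpha>': "\<alpha>' \<in> I" and x: "fst z \<in> convex hull (Vt \<alpha>)" and t: "t \<in> L"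
    and x': "fst z + t \<in> convex hull (Vt \<alpha>')"
  shows "height \<alpha>' (z + (t, of_int k)) = height \<alpha> z + \<lfloor>\<omega> t\<rfloor> + k + wrapped_mass \<alpha> (fst z) t"
proof -
  define lam where "lam = bary (Vt \<alpha>) (fst z)"
  note lam = bary_Vt[OF \<alpha> x, folded lam_def]
  have lam': "bary (Vt \<alpha>') (fst z + t) w = lam (w - t)" for w
    using bary_translate[OF \<alpha> \<alpha>' x t x'] unfolding lam_def by simp
  have supp: "w - t \<in> Vt \<alpha>" "w \<in> Vt \<alpha>'" if "lam (w - t) \<noteq> 0" for w
    using that lam bary_Vt[OF \<alpha>' x'] lam'[of w] by metis+
  have "(\<Sum>w\<in>Vt \<alpha>'. lam (w - t) * a w) = (\<Sum>u\<in>Vt \<alpha>. lam (u + t - t) * a (u + t))"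
    by (rule sum_translate[OF finite_Vt[OF \<alpha>] finite_Vt[OF \<alpha>']]) (use supp in auto)
  also have "\<dots> = (\<Sum>u\<in>Vt \<alpha>. lam u * a u - lam u * \<lfloor>\<omega> t\<rfloor> - (if wraps t u then lam u else 0))"
    unfolding a_int_translate by (intro sum.cong) (auto simp: algebra_simps)
  also have "\<dots> = (\<Sum>u\<in>Vt \<alpha>. lam u * a u) - \<lfloor>\<omega> t\<rfloor> - wrapped_mass \<alpha> (fst z) t"
    using lam unfolding sum_subtractf wrapped_mass_def lam_def[symmetric] by (simp flip: sum_distrib_right)
  finally show ?thesis by (simp add: height_def lam' flip: lam_def)
qed

lemma canon_bary_translate:
  assumes \<alpha>: "\<alpha> \<in> I" and \<alpha>': "\<alpha>' \<in> I" and x: "fst z \<in> convex hull (Vt \<alpha>)" and t: "t \<in> L"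
    and x': "fst z + t \<in> convex hull (Vt \<alpha>')"
  shows "canon_bary \<alpha>' (z + (t, of_int k)) (\<rho> + (t, of_int k)) = canon_bary \<alpha> z \<rho>"
proof -
  obtain u n where \<rho>: "\<rho> = (u, n)" by fastforce
  define lam where "lam = bary (Vt \<alpha>) (fst z)"
  have lam': "bary (Vt \<alpha>') (fst z + t) (w + t) = lam w" for w
    using bary_translate[OF \<alpha> \<alpha>' x t x'] unfolding lam_def by simp
  have shift: "(n + k) - a (u + t) = (n - a u) + of_int (k + \<lfloor>\<omega> t\<rfloor> + (if wraps t u then 1 else 0))"
    unfolding a_int_translate by simp
  have Ints: "(n + k) - a (u + t) \<in> \<int> \<longleftrightarrow> n - a u \<in> \<int>"
    unfolding shift by (metis Ints_add Ints_diff Ints_of_int add_diff_cancel_right')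
  show ?thesis
  proof (cases "lam u = 0")
    case True
    then show ?thesis
      unfolding canon_bary_def Let_def \<rho> fst_add snd_add fst_conv snd_conv lam' lam_def[symmetric] by simp
  next
    case False
    have r: "height \<alpha>' (z + (t, of_int k)) - ((n + k) - a (u + t)) - mass_below (bary (Vt \<alpha>') (fst z + t)) \<alpha>' (u + t)
        = height \<alpha> z - (n - a u) - mass_below lam \<alpha> u"
      unfolding shift height_translate[OF \<alpha> \<alpha>' x t x'] mass_below_translate[OF \<alpha> \<alpha>' x t x' False[unfolded lam_def]]
      by (cases "wraps t u") (simp_all add: lam_def)
    show ?thesis
      unfolding canon_bary_def Let_def \<rho> fst_add snd_add fst_conv snd_conv Ints lam' r lam_def[symmetric] ..
  qed
qed

lemma SpVt_VtY:
  assumes "\<alpha> \<in> I" "v \<in> Vt \<alpha>" "z \<in> convex hull (Y (\<alpha>, v, l))"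
  shows "SpVt (Y (\<alpha>, v, l)) z = {\<rho>. 0 < canon_bary \<alpha> z \<rho>}"
  using SpVt_convex_hull[OF finite_VtY independent_VtY] bary_VtY_eq_canon assms by simp

lemma SpVt_VtY_translate:
  assumes \<alpha>: "\<alpha> \<in> I" and v: "v \<in> Vt \<alpha>" and \<alpha>': "\<alpha>' \<in> I" and v': "v' \<in> Vt \<alpha>'"
    and z: "z \<in> convex hull (Y (\<alpha>, v, l))" and t: "t \<in> L"
    and z': "z + (t, of_int k) \<in> convex hull (Y (\<alpha>', v', l'))"
  shows "SpVt (Y (\<alpha>', v', l')) (z + (t, of_int k)) = (\<lambda>\<rho>. \<rho> + (t, of_int k)) ` SpVt (Y (\<alpha>, v, l)) z"
proof -
  have "fst z + t \<in> convex hull (Vt \<alpha>')" using fst_convex_hull_VtY[OF z'] by simp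
  note canon = canon_bary_translate[OF \<alpha> \<alpha>' fst_convex_hull_VtY[OF z] t this, of k]
  have "{\<rho>. 0 < canon_bary \<alpha>' (z + (t, of_int k)) \<rho>} = (\<lambda>\<rho>. \<rho> + (t, of_int k)) ` {\<rho>. 0 < canon_bary \<alpha> z \<rho>}"
  proof (intro set_eqI iffI)
    fix \<rho> assume "\<rho> \<in> {\<rho>. 0 < canon_bary \<alpha>' (z + (t, of_int k)) \<rho>}"
    then show "\<rho> \<in> (\<lambda>\<rho>. \<rho> + (t, of_int k)) ` {\<rho>. 0 < canon_bary \<alpha> z \<rho>}"
      using canon[of "\<rho> - (t, of_int k)"] by (intro image_eqI[of _ _ "\<rho> - (t, of_int k)"]) auto
  qed (use canon in auto)
  then show ?thesis unfolding SpVt_VtY[OF \<alpha> v z] SpVt_VtY[OF \<alpha>' v' z'] .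
qed

lemma ordY_agree:
  assumes "\<alpha> \<in> I" "\<beta> \<in> I" "\<rho> \<in> Y (\<alpha>, v, l) \<inter> Y (\<beta>, w, l')" "\<sigma> \<in> Y (\<alpha>, v, l) \<inter> Y (\<beta>, w, l')"
  shows "ordY ord (\<alpha>, v, l) \<rho> \<sigma> \<longleftrightarrow> ordY ord (\<beta>, w, l') \<rho> \<sigma>"
proof -
  have "fst \<rho> \<in> Vt \<alpha> \<inter> Vt \<beta>" "fst \<sigma> \<in> Vt \<alpha> \<inter> Vt \<beta>" using assms(3,4) fst_VtY by blast+
  then show ?thesis unfolding ordY_def using ord_agree[OF assms(1,2)] by simp
qed

lemma ordY_translate:
  assumes \<alpha>: "\<alpha> \<in> I" and \<alpha>': "\<alpha>' \<in> I" and t: "t \<in> L"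
    and \<rho>: "\<rho> \<in> Y (\<alpha>, v, l)" "\<rho> + (t, of_int k) \<in> Y (\<alpha>', v', l')"
    and \<sigma>: "\<sigma> \<in> Y (\<alpha>, v, l)" "\<sigma> + (t, of_int k) \<in> Y (\<alpha>', v', l')"
  shows "ordY ord (\<alpha>, v, l) \<rho> \<sigma> \<longleftrightarrow> ordY ord (\<alpha>', v', l') (\<rho> + (t, of_int k)) (\<sigma> + (t, of_int k))"
proof -
  have "fst \<rho> + t \<in> Vt \<alpha>'" "fst \<sigma> + t \<in> Vt \<alpha>'" using fst_VtY[OF \<rho>(2)] fst_VtY[OF \<sigma>(2)] by simp_all
  then have "ord \<alpha> (fst \<rho>) (fst \<sigma>) \<longleftrightarrow> ord \<alpha>' (fst \<rho> + t) (fst \<sigma> + t)"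
    using ord_translate[OF \<alpha> \<alpha>' fst_VtY[OF \<rho>(1)] fst_VtY[OF \<sigma>(1)] t] by simp
  then show ?thesis unfolding ordY_def by auto
qed

section \<open>Covering and packing\<close>

lemma Omega_bounds_VtY:
  assumes \<alpha>: "\<alpha> \<in> I" and \<kappa>: "\<kappa> \<in> convex hull (Y (\<alpha>, v, l))"
  shows "A v + l - 1 \<le> \<omega> (fst \<kappa>) + snd \<kappa> \<and> \<omega> (fst \<kappa>) + snd \<kappa> \<le> A v + l"
proof -
  define \<Omega> where "\<Omega> = (\<lambda>\<kappa>. \<omega> (fst \<kappa>) + snd \<kappa>)"
  have "linear \<Omega>"
    unfolding \<Omega>_def using linear_compose_add[OF linear_compose[OF linear_fst linear_\<omega>] linear_snd]
    by (simp add: o_def)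
  then have "convex (\<Omega> -` {A v + l - 1 .. A v + l})" by (rule convex_linear_vimage) simp
  moreover have "Y (\<alpha>, v, l) \<subseteq> \<Omega> -` {A v + l - 1 .. A v + l}"
  proof
    fix \<rho> assume "\<rho> \<in> Y (\<alpha>, v, l)"
    then consider u where "u \<in> seg_le \<alpha> v" "\<rho> = up u l" | u where "u \<in> seg_ge \<alpha> v" "\<rho> = lo u l"
      unfolding VtY_eq by blast
    then show "\<rho> \<in> \<Omega> -` {A v + l - 1 .. A v + l}"
    proof cases
      case 1
      then have "A u \<le> A v" unfolding seg_le_def ordA_def by auto
      then show ?thesis using 1 A_fun_bounds[of \<omega> u] A_fun_bounds[of \<omega> v] unfolding \<Omega>_def A_fun_eq by simp
    next
      case 2
      then have "A v \<le> A u" unfolding seg_ge_def ordA_def by auto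
      then show ?thesis using 2 A_fun_bounds[of \<omega> u] A_fun_bounds[of \<omega> v] unfolding \<Omega>_def A_fun_eq by simp
    qed
  qed
  ultimately have "convex hull (Y (\<alpha>, v, l)) \<subseteq> \<Omega> -` {A v + l - 1 .. A v + l}" by (simp add: hull_minimal)
  then show ?thesis using \<kappa> unfolding \<Omega>_def by auto
qed

lemma lower_set_successor:
  assumes \<alpha>: "\<alpha> \<in> I" and v: "v \<in> Vt \<alpha>" and w: "w \<in> Vt \<alpha>" and vw: "precA \<alpha> v w"
    and least: "\<And>x. x \<in> Vt \<alpha> \<Longrightarrow> precA \<alpha> v x \<Longrightarrow> x \<noteq> w \<Longrightarrow> precA \<alpha> w x"
  shows "{x\<in>Vt \<alpha>. precA \<alpha> x w} = insert v {x\<in>Vt \<alpha>. precA \<alpha> x v}"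
proof -
  have "precA \<alpha> x v \<or> x = v" if "x \<in> Vt \<alpha>" "precA \<alpha> x w" for x
    using precA_cases[OF \<alpha> that(1) v] least[OF that(1)] precA_asym[OF \<alpha> that(1) w that(2)]
      precA_irrefl[OF \<alpha> w] that by metis
  then show ?thesis using v vw precA_trans[OF \<alpha> _ v w] by auto
qed

lemma lower_set_top:
  assumes \<alpha>: "\<alpha> \<in> I" and v: "v \<in> Vt \<alpha>" and top: "\<And>x. x \<in> Vt \<alpha> \<Longrightarrow> \<not> precA \<alpha> v x"
  shows "Vt \<alpha> = insert v {x\<in>Vt \<alpha>. precA \<alpha> x v}"
  using precA_cases[OF \<alpha> _ v] top v by blast

lemma mass_intervals_cover:
  assumes \<alpha>: "\<alpha> \<in> I" and nonneg: "\<And>w. w \<in> Vt \<alpha> \<Longrightarrow> 0 \<le> lam w" and sum1: "sum lam (Vt \<alpha>) = 1"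
    and t: "0 \<le> t" "t \<le> 1"
  obtains v where "v \<in> Vt \<alpha>" "mass_below lam \<alpha> v \<le> t" "t \<le> mass_below lam \<alpha> v + lam v"
proof -
  note fin = finite_Vt[OF \<alpha>]
  note order = strict_total_precA[OF \<alpha>]
  define P where "P = {u\<in>Vt \<alpha>. mass_below lam \<alpha> u \<le> t}"
  have "Vt \<alpha> \<noteq> {}" using sum1 by auto
  then obtain v0 where v0: "v0 \<in> Vt \<alpha>" "\<And>x. x \<in> Vt \<alpha> \<Longrightarrow> x \<noteq> v0 \<Longrightarrow> precA \<alpha> v0 x"
    using strict_total_on_least[OF order fin _ subset_refl] by blast
  have "{x\<in>Vt \<alpha>. precA \<alpha> x v0} = {}"
    using v0 precA_asym[OF \<alpha> _ v0(1)] precA_irrefl[OF \<alpha> v0(1)] by blast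
  then have "mass_below lam \<alpha> v0 = 0" unfolding mass_below_def by (simp only: sum.empty)
  then have "P \<noteq> {}" using v0 t unfolding P_def by auto
  moreover have P: "P \<subseteq> Vt \<alpha>" unfolding P_def by blast
  ultimately obtain v where "v \<in> P" and greatest: "\<And>u. u \<in> P \<Longrightarrow> u \<noteq> v \<Longrightarrow> precA \<alpha> u v"
    using strict_total_on_greatest[OF order finite_subset[OF P fin] _ P] by blast
  then have v: "v \<in> Vt \<alpha>" "mass_below lam \<alpha> v \<le> t" unfolding P_def by auto
  have "t \<le> mass_below lam \<alpha> v + lam v"
  proof (rule ccontr)
    assume less: "\<not> t \<le> mass_below lam \<alpha> v + lam v"
    show False
    proof (cases "\<exists>x\<in>Vt \<alpha>. precA \<alpha> v x")
      case False
      then have "sum lam (Vt \<alpha>) = mass_below lam \<alpha> v + lam v"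
        using mass_below_insert[OF \<alpha> v(1)] lower_set_top[OF \<alpha> v(1)] by simp
      then show False using sum1 less t by simp
    next
      case True
      then have "{x\<in>Vt \<alpha>. precA \<alpha> v x} \<noteq> {}" by blast
      moreover have above: "{x\<in>Vt \<alpha>. precA \<alpha> v x} \<subseteq> Vt \<alpha>" by blast
      ultimately obtain w where w: "w \<in> Vt \<alpha>" "precA \<alpha> v w"
        and least: "\<And>x. x \<in> Vt \<alpha> \<Longrightarrow> precA \<alpha> v x \<Longrightarrow> x \<noteq> w \<Longrightarrow> precA \<alpha> w x"
        using strict_total_on_least[OF order finite_subset[OF above fin] _ above] by blast
      have "mass_below lam \<alpha> w = mass_below lam \<alpha> v + lam v"
        using mass_below_insert[OF \<alpha> v(1)] lower_set_successor[OF \<alpha> v(1) w least]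
        unfolding mass_below_def by simp
      then have "w \<in> P" "w \<noteq> v" using w less precA_irrefl[OF \<alpha> v(1)] unfolding P_def by auto
      then show False using greatest precA_asym[OF \<alpha> v(1) w(1) w(2)] by blast
    qed
  qed
  then show thesis using that v by blast
qed

lemma point_in_VtY:
  assumes \<alpha>: "\<alpha> \<in> I" and x: "x \<in> convex hull (Vt \<alpha>)" and v: "v \<in> Vt \<alpha>"
  defines "lam \<equiv> bary (Vt \<alpha>) x"
  assumes t: "mass_below lam \<alpha> v \<le> t" "t \<le> mass_below lam \<alpha> v + lam v"
  shows "(x, (\<Sum>u\<in>Vt \<alpha>. lam u * a u) + (real_of_int l - 1) + t) \<in> convex hull (Y (\<alpha>, v, l))"
proof -
  note lam = bary_Vt[OF \<alpha> x, folded lam_def]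
  define \<theta> where "\<theta> = t - mass_below lam \<alpha> v"
  define \<mu> where "\<mu> = (\<lambda>\<rho>. if \<rho> = up v l then \<theta> else if \<rho> = lo v l then lam v - \<theta> else lam (fst \<rho>))"
  have proj: "proj_weight \<mu> \<alpha> v l = lam"
  proof
    fix u show "proj_weight \<mu> \<alpha> v l u = lam u"
    proof (cases "u \<in> Vt \<alpha>")
      case False then show ?thesis using proj_weight_outside lam by simp
    next
      case u: True
      show ?thesis using precA_cases[OF \<alpha> u v]
        by cases (use proj_weight_cases[OF \<alpha> u v] precA_irrefl[OF \<alpha> v] in \<open>auto simp: \<mu>_def\<close>)
    qed
  qed
  have "\<forall>\<rho>\<in>Y (\<alpha>, v, l). 0 \<le> \<mu> \<rho>" using t lam unfolding \<mu>_def \<theta>_def by auto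
  moreover have "sum \<mu> (Y (\<alpha>, v, l)) = 1" using sum_proj_weight[OF \<alpha>] proj lam by simp
  moreover have "(\<Sum>\<rho>\<in>Y (\<alpha>, v, l). \<mu> \<rho> *\<^sub>R \<rho>) = (x, (\<Sum>u\<in>Vt \<alpha>. lam u * a u) + (real_of_int l - 1) + t)"
    using fst_comb_VtY[OF \<alpha>, of \<mu> v l] snd_comb_VtY[OF \<alpha> v, of \<mu> l] proj lam
    by (simp add: prod_eq_iff \<mu>_def \<theta>_def)
  ultimately show ?thesis unfolding convex_hull_finite[OF finite_VtY[OF \<alpha>]] by blast
qed

lemma mem_J_idx: "(\<alpha>, v, l) \<in> J_idx I Vt M1 M2 \<longleftrightarrow> \<alpha> \<in> I \<and> v \<in> Vt \<alpha> \<and> M1 \<le> l \<and> l < M2"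
  unfolding J_idx_def by simp

lemma VtY_surj:
  assumes M: "M1 < M2"
  shows "\<exists>z\<in>(\<Union>\<gamma>\<in>J_idx I Vt M1 M2. convex hull (Y \<gamma>)). y - z \<in> {(t, of_int ((M2 - M1) * k)) | t k. t \<in> L}"
proof -
  obtain \<alpha> x where \<alpha>: "\<alpha> \<in> I" and x: "x \<in> convex hull (Vt \<alpha>)" and y: "fst y - x \<in> L"
    using translate_into_complex[of "fst y"] by blast
  define lam where "lam = bary (Vt \<alpha>) x"
  note lam = bary_Vt[OF \<alpha> x, folded lam_def]
  define B where "B = (\<Sum>u\<in>Vt \<alpha>. lam u * a u)"
  define N where "N = real_of_int (M2 - M1)"
  \<comment> \<open>translate vertically by a multiple of \<open>M2 - M1\<close> so that the height \<open>s - B\<close> lies in \<open>[M1 - 1, M2 - 1)\<close>\<close>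
  define k where "k = \<lfloor>(snd y - B - M1 + 1) / N\<rfloor>"
  define s where "s = snd y - of_int ((M2 - M1) * k)"
  define l where "l = \<lfloor>s - B\<rfloor> + 1"
  define t where "t = frac (s - B)"
  have N: "0 < N" using M unfolding N_def by simp
  have "of_int k * N \<le> snd y - B - M1 + 1" "snd y - B - M1 + 1 < (of_int k + 1) * N"
    using floor_divide_lower[OF N] floor_divide_upper[OF N] unfolding k_def by blast+
  then have "M1 - 1 \<le> s - B" "s - B < M2 - 1" unfolding s_def N_def by (simp_all add: algebra_simps)
  then have l: "M1 \<le> l" "l < M2" unfolding l_def by linarith+
  obtain v where v: "v \<in> Vt \<alpha>" "mass_below lam \<alpha> v \<le> t" "t \<le> mass_below lam \<alpha> v + lam v"
    using mass_intervals_cover[OF \<alpha>, of lam t] lam frac_lt_1[of "s - B"] unfolding t_def by auto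
  have "(x, s) \<in> convex hull (Y (\<alpha>, v, l))"
    using point_in_VtY[OF \<alpha> x v(1), of t l] v unfolding lam_def[symmetric] B_def[symmetric]
    by (simp add: l_def t_def frac_def)
  moreover have "(\<alpha>, v, l) \<in> J_idx I Vt M1 M2" using \<alpha> v l by (simp add: mem_J_idx)
  moreover have "y - (x, s) = (fst y - x, of_int ((M2 - M1) * k))" unfolding s_def by (simp add: prod_eq_iff)
  ultimately show ?thesis using y by blast
qed

lemma height_interior_VtY:
  assumes \<alpha>: "\<alpha> \<in> I" and v: "v \<in> Vt \<alpha>" and z: "z \<in> interior (convex hull (Y (\<alpha>, v, l)))"
  shows "real_of_int l - 1 < height \<alpha> z \<and> height \<alpha> z < real_of_int l"
proof -
  have zh: "z \<in> convex hull (Y (\<alpha>, v, l))" using z interior_subset by blast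
  define \<mu> where "\<mu> = bary (Y (\<alpha>, v, l)) z"
  define lam where "lam = proj_weight \<mu> \<alpha> v l"
  note \<mu> = bary_VtY[OF \<alpha> v zh, folded \<mu>_def]
  have "up v l \<in> Y (\<alpha>, v, l)" "lo v l \<in> Y (\<alpha>, v, l)" unfolding VtY_eq using vertex_mem_segs[OF v] by auto
  then have "0 < \<mu> (up v l)" "0 < \<mu> (lo v l)"
    using bary_pos_interior[OF finite_VtY[OF \<alpha>] independent_VtY[OF \<alpha> v] card_VtY[OF \<alpha> v] z]
    unfolding \<mu>_def by blast+
  moreover have "lam v = \<mu> (up v l) + \<mu> (lo v l)" using proj_weight_at[OF \<alpha> v v] unfolding lam_def .
  moreover have "0 \<le> mass_below lam \<alpha> v" "mass_below lam \<alpha> v + lam v \<le> 1"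
  proof -
    have nonneg: "0 \<le> lam w" for w using \<mu> unfolding lam_def proj_weight_def by simp
    have "sum lam (Vt \<alpha>) = 1" using \<mu> sum_proj_weight[OF \<alpha>] unfolding lam_def by metis
    then show "0 \<le> mass_below lam \<alpha> v" "mass_below lam \<alpha> v + lam v \<le> 1"
      using mass_below_nonneg mass_below_add_le_1[OF \<alpha> v] nonneg by auto
  qed
  ultimately show ?thesis using height_VtY[OF \<alpha> v zh] unfolding \<mu>_def[symmetric] lam_def[symmetric] by simp
qed

lemma fst_interior_VtY:
  assumes "z \<in> interior (convex hull (Y (\<alpha>, v, l)))"
  shows "fst z \<in> interior (convex hull (Vt \<alpha>))"
proof -
  have "open (fst ` interior (convex hull (Y (\<alpha>, v, l))))" by (rule open_image_fst) simp
  moreover have "fst ` interior (convex hull (Y (\<alpha>, v, l))) \<subseteq> convex hull (Vt \<alpha>)"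
    using fst_convex_hull_VtY interior_subset by blast
  ultimately show ?thesis using assms interior_maximal by blast
qed

lemma VtY_inj:
  assumes M: "M1 < M2"
    and z: "z \<in> (\<Union>\<gamma>\<in>J_idx I Vt M1 M2. interior (convex hull (Y \<gamma>)))"
    and z': "z' \<in> (\<Union>\<gamma>\<in>J_idx I Vt M1 M2. interior (convex hull (Y \<gamma>)))"
    and d: "z - z' \<in> {(t, of_int ((M2 - M1) * k)) | t k. t \<in> L}"
  shows "z = z'"
proof -
  obtain \<alpha> v l where \<alpha>: "\<alpha> \<in> I" "v \<in> Vt \<alpha>" "M1 \<le> l" "l < M2"
    and zi: "z \<in> interior (convex hull (Y (\<alpha>, v, l)))"
    using z unfolding J_idx_def by blast
  obtain \<alpha>' v' l' where \<alpha>': "\<alpha>' \<in> I" "v' \<in> Vt \<alpha>'" "M1 \<le> l'" "l' < M2"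
    and zi': "z' \<in> interior (convex hull (Y (\<alpha>', v', l')))"
    using z' unfolding J_idx_def by blast
  obtain t k where tk: "z - z' = (t, of_int ((M2 - M1) * k))" "t \<in> L" using d by blast
  have f: "fst z \<in> interior (convex hull (Vt \<alpha>))" "fst z' \<in> interior (convex hull (Vt \<alpha>'))"
    using fst_interior_VtY[OF zi] fst_interior_VtY[OF zi'] .
  have fst_eq: "fst z = fst z'"
    using interior_translate_eq[OF \<alpha>(1) \<alpha>'(1) f] tk by (simp add: prod_eq_iff)
  have "fst z \<in> convex hull (Vt \<alpha>)" "fst z \<in> convex hull (Vt \<alpha>')" using f fst_eq interior_subset by auto
  then have "height \<alpha> z - height \<alpha>' z' = height \<alpha>' z - height \<alpha>' z'"
    using height_agree[OF \<alpha>(1) \<alpha>'(1)] by simp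
  also have "\<dots> = snd z - snd z'" unfolding height_def fst_eq by simp
  also have "\<dots> = of_int ((M2 - M1) * k)" using tk(1) by (simp add: prod_eq_iff)
  finally have "\<bar>(M2 - M1) * k\<bar> < M2 - M1"
    using height_interior_VtY[OF \<alpha>(1,2) zi] height_interior_VtY[OF \<alpha>'(1,2) zi'] \<alpha>(3,4) \<alpha>'(3,4)
    by linarith
  then have "k = 0" using M by (simp add: abs_mult)
  then show ?thesis using tk(1) fst_eq by (simp add: prod_eq_iff)
qed

lemma Lambda_complex_VtY:
  assumes M: "M1 < M2"
  shows "Lambda_complex {(t, of_int ((M2 - M1) * k)) | t k. t \<in> L} (J_idx I Vt M1 M2) Y (ordY ord)"
  unfolding Lambda_complex_def ordered_complex_def
  apply (intro conjI)
  subgoal using finite_VtY card_VtY independent_VtY strict_total_ordY by (auto simp: J_idx_def)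
  subgoal using faces_VtY by (auto simp: J_idx_def)
  subgoal using ordY_agree by (auto simp: J_idx_def)
  subgoal using ordY_translate by (auto simp: J_idx_def simp del: of_int_mult of_int_diff)
  subgoal using VtY_surj[OF M] by blast
  subgoal using VtY_inj[OF M] by blast
  subgoal unfolding J_idx_def by (clarify, rule SpVt_VtY_translate) auto
  done

end

theorem proposition1:
  fixes L :: "'a::euclidean_space set"
    and I :: "'i set" and Vt :: "'i \<Rightarrow> 'a set" and ord :: "'i \<Rightarrow> 'a \<Rightarrow> 'a \<Rightarrow> bool"
    and \<omega> :: "'a \<Rightarrow> real" and M1 M2 :: int
  assumes "full_lattice L"
    and "Lambda_complex L I Vt ord"
    and "M1 < M2"
    and "linear \<omega>"
  shows "Lambda_complex {(t, of_int ((M2 - M1) * k)) | t k. t \<in> L}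
           (J_idx I Vt M1 M2) (VtY \<omega> Vt ord) (ordY ord)
       \<and> (\<forall>\<alpha> v l. (\<alpha>, v, l) \<in> J_idx I Vt M1 M2 \<longrightarrow>
            (\<forall>\<kappa>\<in>convex hull (VtY \<omega> Vt ord (\<alpha>, v, l)).
               A_fun \<omega> v + of_int l - 1 \<le> \<omega> (fst \<kappa>) + snd \<kappa> \<and>
               \<omega> (fst \<kappa>) + snd \<kappa> \<le> A_fun \<omega> v + of_int l))"
proof -
  interpret Y_construction L I Vt ord \<omega> using assms(2,4) by (rule Y_construction.intro)
  show ?thesis
    using Lambda_complex_VtY[OF assms(3)] Omega_bounds_VtY by (auto simp: mem_J_idx)
qed

end
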